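(* Let $q\in K$ with $|q-1|<1$. Let $g(T)\in\mathcal{E}_K$ with $|g(T)|_1\le1$, and consider the equation $\Delta_q-g(T)$ (i.e. $\Delta_q(y)=g\,y$, equivalently $d_q(y)=g_{[1]}y$ with $g_{[1]}=g/T$). Then $\mathrm{Ray}(\Delta_q-g(T),1)>\omega_q$ if and only if $|g_{[s]}(T)|_1<1$ for some $s\ge1$.
   Context: $K$ is a field of characteristic $0$, complete for a discrete non-archimedean absolute value, residue field of characteristic $p>0$. $\mathcal{E}_K$ is the ring of Laurent series $\sum a_iT^i$ over $K$ with $\sup|a_i|<\infty$ and $|a_i|\to0$ as $i\to-\infty$, Gauss norm $|\cdot|_1=\sup|a_i|$. $\sigma_q(f)(T)=f(qT)$, $d_q=\frac{\sigma_q-1}{(q-1)T}$, $\Delta_q=\frac{\sigma_q-1}{q-1}$, $[n]_q!=\prod_{i=1}^n\frac{q^i-1}{q-1}$; for $|q-1|<1$ the limit $\omega_q:=\lim_n|[n]_q!|^{1/n}$ exists and is $<1$. Set $g_{[0]}=1$, $g_{[1]}=g/T$, $g_{[s+1]}=d_q(g_{[s]})+\sigma_q(g_{[s]})g_{[1]}$, and $\mathrm{Ray}(\Delta_q-g,1)=\min\big(1,\liminf_s(|g_{[s]}|_1/|[s]_q!|)^{-1/s}\big)$. *)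

theory Defs
  imports Complex_Main "HOL-Library.Extended_Real" "HOL-Computational_Algebra.Primes"
begin

definition nonarch_abs :: "('a::field \<Rightarrow> real) \<Rightarrow> bool" where
  "nonarch_abs av \<longleftrightarrow>
     (\<forall>x. av x \<ge> 0) \<and> (\<forall>x. av x = 0 \<longleftrightarrow> x = 0) \<and>
     (\<forall>x y. av (x * y) = av x * av y) \<and>
     (\<forall>x y. av (x + y) \<le> max (av x) (av y))"

definition discrete_abs :: "('a::field \<Rightarrow> real) \<Rightarrow> bool" where
  "discrete_abs av \<longleftrightarrow>
     (\<exists>\<pi>. 0 < av \<pi> \<and> av \<pi> < 1 \<and> (\<forall>x. x \<noteq> 0 \<longrightarrow> (\<exists>k::int. av x = av \<pi> powi k)))"

definition complete_abs :: "('a::field \<Rightarrow> real) \<Rightarrow> bool" where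
  "complete_abs av \<longleftrightarrow>
     (\<forall>X::nat \<Rightarrow> 'a. (\<forall>e>0. \<exists>N. \<forall>m\<ge>N. \<forall>n\<ge>N. av (X m - X n) < e)
        \<longrightarrow> (\<exists>L. (\<lambda>n. av (X n - L)) \<longlonglongrightarrow> 0))"

text \<open>K is complete for a discrete non-archimedean absolute value whose residue field
  has characteristic p > 0 (p prime and |p| < 1). Characteristic 0 of K is the type class.\<close>
definition cdvf :: "('a::field_char_0 \<Rightarrow> real) \<Rightarrow> nat \<Rightarrow> bool" where
  "cdvf av p \<longleftrightarrow> nonarch_abs av \<and> discrete_abs av \<and> complete_abs av \<and>
                  prime p \<and> av (of_nat p) < 1"

definition in_EK :: "('a::field \<Rightarrow> real) \<Rightarrow> (int \<Rightarrow> 'a) \<Rightarrow> bool" where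
  "in_EK av f \<longleftrightarrow> bdd_above (range (\<lambda>i. av (f i))) \<and>
                   (\<lambda>n::nat. av (f (- int n))) \<longlonglongrightarrow> 0"

definition gauss_norm :: "('a::field \<Rightarrow> real) \<Rightarrow> (int \<Rightarrow> 'a) \<Rightarrow> real" where
  "gauss_norm av f = (SUP i. av (f i))"

definition av_lim :: "('a::field \<Rightarrow> real) \<Rightarrow> (nat \<Rightarrow> 'a) \<Rightarrow> 'a" where
  "av_lim av S = (THE L. (\<lambda>N. av (S N - L)) \<longlonglongrightarrow> 0)"

definition ls_mult :: "('a::field \<Rightarrow> real) \<Rightarrow> (int \<Rightarrow> 'a) \<Rightarrow> (int \<Rightarrow> 'a) \<Rightarrow> (int \<Rightarrow> 'a)" where
  "ls_mult av a b = (\<lambda>n. av_lim av (\<lambda>N::nat. \<Sum>i\<in>{- int N..int N}. a i * b (n - i)))"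

definition ls_add :: "(int \<Rightarrow> 'a::field) \<Rightarrow> (int \<Rightarrow> 'a) \<Rightarrow> (int \<Rightarrow> 'a)" where
  "ls_add a b = (\<lambda>i. a i + b i)"

definition ls_one :: "int \<Rightarrow> 'a::field" where
  "ls_one = (\<lambda>i. if i = 0 then 1 else 0)"

definition ls_divT :: "(int \<Rightarrow> 'a::field) \<Rightarrow> (int \<Rightarrow> 'a)" where
  "ls_divT f = (\<lambda>i. f (i + 1))"

text \<open>sigma_q(f)(T) = f(qT)\<close>
definition sigma_q :: "'a::field \<Rightarrow> (int \<Rightarrow> 'a) \<Rightarrow> (int \<Rightarrow> 'a)" where
  "sigma_q q f = (\<lambda>i. q powi i * f i)"

definition d_q :: "'a::field \<Rightarrow> (int \<Rightarrow> 'a) \<Rightarrow> (int \<Rightarrow> 'a)" where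
  "d_q q f = ls_divT (\<lambda>i. (sigma_q q f i - f i) / (q - 1))"

text \<open>g_[0] = 1, g_[s+1] = d_q(g_[s]) + sigma_q(g_[s]) g_[1], with g_[1] = g/T
  (the case s = 0 of the recursion gives exactly g_[1] = g/T).\<close>
primrec g_br :: "('a::field \<Rightarrow> real) \<Rightarrow> 'a \<Rightarrow> (int \<Rightarrow> 'a) \<Rightarrow> nat \<Rightarrow> (int \<Rightarrow> 'a)" where
  "g_br av q g 0 = ls_one"
| "g_br av q g (Suc s) =
     ls_add (d_q q (g_br av q g s)) (ls_mult av (sigma_q q (g_br av q g s)) (ls_divT g))"

definition q_int :: "'a::field \<Rightarrow> nat \<Rightarrow> 'a" where
  "q_int q n = (q ^ n - 1) / (q - 1)"

definition q_fact :: "'a::field \<Rightarrow> nat \<Rightarrow> 'a" where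
  "q_fact q n = (\<Prod>i=1..n. q_int q i)"

definition omega_q :: "('a::field \<Rightarrow> real) \<Rightarrow> 'a \<Rightarrow> real" where
  "omega_q av q = lim (\<lambda>n. av (q_fact q n) powr (1 / real n))"

definition Ray :: "('a::field \<Rightarrow> real) \<Rightarrow> 'a \<Rightarrow> (int \<Rightarrow> 'a) \<Rightarrow> ereal" where
  "Ray av q g = min 1 (liminf (\<lambda>s. if gauss_norm av (g_br av q g s) = 0 then \<infinity>
        else ereal ((gauss_norm av (g_br av q g s) / av (q_fact q s)) powr (- 1 / real s))))"

end

theory Submission
  imports Defs
begin

text \<open>
  Write \<open>g[s]\<close> for \<open>g\<^sub>[\<^sub>s\<^sub>]\<close> and \<open>D y = d\<^sub>q y + \<sigma>\<^sub>q(y) g[1]\<close>, so that \<open>g[s + t] = D\<^sup>t g[s]\<close>.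
  The \<open>q\<close>-Leibniz rule expands \<open>D\<^sup>t f\<close> as \<open>\<Sum>k\<le>t. [t, k]\<^sub>q \<sigma>\<^sub>q\<^sup>k (d\<^sub>q\<^sup>t\<^sup>-\<^sup>k f) g[k]\<close> with Gaussian
  binomials \<open>[t, k]\<^sub>q\<close>, and \<open>|d\<^sub>q\<^sup>j f|\<^sub>1 \<le> |[j]\<^sub>q!| |f|\<^sub>1\<close>. Hence \<open>|g[s]|\<^sub>1 \<le> 1\<close> and
  \<open>|g[s + t]|\<^sub>1 \<le> max k\<le>t. |[t - k]\<^sub>q!| |g[s]|\<^sub>1 |g[k]|\<^sub>1\<close>.

  The sequence \<open>|[n]\<^sub>q!|\<close> is submultiplicative and at least \<open>c\<^sup>n\<close> for some \<open>c > 0\<close>: a power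
  \<open>Q = q^(p^K)\<close> is so close to \<open>1\<close> that \<open>|Q\<^sup>j - 1| = |j| |Q - 1|\<close>, and \<open>|n!| \<ge> |p|\<^sup>n\<close>.
  By Fekete's lemma \<open>\<omega>\<^sub>q = lim |[n]\<^sub>q!|^(1/n)\<close> exists and is positive, and \<open>|[p]\<^sub>q| < 1\<close>
  gives \<open>\<omega>\<^sub>q < 1\<close>.

  If \<open>|g[s]|\<^sub>1 < 1\<close> for some \<open>s \<ge> 1\<close>, the recursive bound and \<open>|[j]\<^sub>q!| \<le> \<theta>\<^sup>j\<close> for large \<open>j\<close>
  (any \<open>\<omega>\<^sub>q < \<theta> < 1\<close>) give \<open>|g[n]|\<^sub>1 \<le> C \<rho>\<^sup>n\<close> with \<open>\<rho> < 1\<close>, so the radius is at least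
  \<open>min 1 (\<omega>\<^sub>q / \<rho>) > \<omega>\<^sub>q\<close>. Otherwise all \<open>|g[s]|\<^sub>1 = 1\<close>, and the radius is the limit
  \<open>\<omega>\<^sub>q\<close> of \<open>|[s]\<^sub>q!|^(1/s)\<close>.
\<close>

section \<open>Non-archimedean absolute values\<close>

locale nonarch_field =
  fixes av :: "'a::field \<Rightarrow> real"
  assumes nonarch: "nonarch_abs av"
begin

lemma av_nonneg [simp]: "0 \<le> av x"
  and av_eq_0_iff [simp]: "av x = 0 \<longleftrightarrow> x = 0"
  and av_mult [simp]: "av (x * y) = av x * av y"
  and av_add_le_max: "av (x + y) \<le> max (av x) (av y)"
  using nonarch unfolding nonarch_abs_def by blast+

lemma av_0 [simp]: "av 0 = 0"
  by simp

lemma av_pos: "x \<noteq> 0 \<Longrightarrow> 0 < av x"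
  using av_nonneg[of x] av_eq_0_iff[of x] by linarith

lemma av_1 [simp]: "av 1 = 1"
  using av_mult[of 1 1] av_pos[of 1] by simp

lemma av_minus [simp]: "av (- x) = av x"
proof -
  have "av (-1) * av (-1) = 1"
    using av_mult[of "-1" "-1"] by simp
  then have "av (-1) = 1"
    using square_eq_1_iff[of "av (-1)"] av_nonneg[of "-1"] by auto
  then show ?thesis
    using av_mult[of "-1" x] by simp
qed

lemma av_diff_commute: "av (x - y) = av (y - x)"
  using av_minus[of "x - y"] by simp

lemma av_diff_le_max: "av (x - y) \<le> max (av x) (av y)"
  using av_add_le_max[of x "- y"] by simp

lemma av_power [simp]: "av (x ^ n) = av x ^ n"
  by (induction n) auto

lemma av_inverse [simp]: "av (inverse x) = inverse (av x)"
proof (cases "x = 0")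
  case False
  then have "av x * av (inverse x) = 1"
    by (simp flip: av_mult)
  then show ?thesis
    by (simp add: inverse_unique)
qed simp

lemma av_divide [simp]: "av (x / y) = av x / av y"
  by (simp add: divide_inverse)

lemma av_power_int [simp]: "av (x powi i) = av x powi i"
  by (cases "i \<ge> 0") (auto simp: power_int_def)

lemma av_prod: "av (prod f S) = (\<Prod>i\<in>S. av (f i))"
  by (induction S rule: infinite_finite_induct) auto

lemma av_add_le: "av x \<le> M \<Longrightarrow> av y \<le> M \<Longrightarrow> av (x + y) \<le> M"
  using av_add_le_max[of x y] by linarith

lemma av_diff_le: "av x \<le> M \<Longrightarrow> av y \<le> M \<Longrightarrow> av (x - y) \<le> M"
  using av_diff_le_max[of x y] by linarith

lemma av_add_eq_right: "av x < av y \<Longrightarrow> av (x + y) = av y"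
  using av_add_le_max[of x y] av_diff_le_max[of "x + y" x] by (simp add: max_def split: if_splits)

lemma av_sum_le: "(\<And>i. i \<in> S \<Longrightarrow> av (f i) \<le> M) \<Longrightarrow> 0 \<le> M \<Longrightarrow> av (sum f S) \<le> M"
  by (induction S rule: infinite_finite_induct) (auto intro!: av_add_le)

lemma av_of_nat_le_1: "av (of_nat n) \<le> 1"
  by (induction n) (auto intro!: av_add_le)

lemma av_eq_1_of_close_to_1: "av (x - 1) < 1 \<Longrightarrow> av x = 1"
  using av_add_eq_right[of "x - 1" 1] by simp

text \<open>\<open>x\<^sup>n - 1 = (x - 1) (1 + x + \<dots> + x^(n - 1))\<close>, and the second factor has absolute value at most 1.\<close>
lemma av_power_sub_1_le:
  assumes "av x = 1"
  shows "av (x ^ n - 1) \<le> av (x - 1)"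
proof -
  have "av (\<Sum>i<n. x ^ i) \<le> 1"
    by (rule av_sum_le) (auto simp: assms)
  then show ?thesis
    by (simp only: power_diff_1_eq av_mult) (rule mult_right_le_one_le, auto)
qed

lemma av_lim_eq:
  assumes "(\<lambda>N. av (S N - L)) \<longlonglongrightarrow> 0"
  shows "av_lim av S = L"
  unfolding av_lim_def
proof (rule the_equality)
  fix L' assume L': "(\<lambda>N. av (S N - L')) \<longlonglongrightarrow> 0"
  have "(\<lambda>N. max (av (S N - L)) (av (S N - L'))) \<longlonglongrightarrow> max 0 0"
    by (intro tendsto_max assms L')
  moreover have "av (L' - L) \<le> max (av (S N - L)) (av (S N - L'))" for N
    using av_diff_le_max[of "S N - L" "S N - L'"] by (simp add: max.commute)
  ultimately have "av (L' - L) \<le> 0"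
    by (intro LIMSEQ_le_const) auto
  then show "L' = L"
    using av_nonneg[of "L' - L"] by simp
qed (rule assms)

end

section \<open>Unconditional summation\<close>

lemma finite_int_subset_interval:
  assumes "finite (B :: int set)"
  obtains N :: nat where "B \<subseteq> {- int N..int N}"
proof -
  obtain N where "\<forall>n \<in> (\<lambda>x. nat \<bar>x\<bar>) ` B. n \<le> N"
    using assms finite_nat_set_iff_bounded_le by blast
  then have "B \<subseteq> {- int N..int N}"
    by force
  then show thesis
    by (rule that)
qed

lemma sum_diff_eq_sum_set_diffs:
  fixes u :: "'b \<Rightarrow> 'c::ab_group_add"
  assumes "finite C" "finite D"
  shows "sum u C - sum u D = sum u (C - D) - sum u (D - C)"
  using sum.Int_Diff[OF assms(1), of u D] sum.Int_Diff[OF assms(2), of u C]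
  by (simp add: Int_commute)

context nonarch_field
begin

definition has_usum :: "('b \<Rightarrow> 'a) \<Rightarrow> 'a \<Rightarrow> bool" where
  "has_usum u s \<longleftrightarrow>
     (\<forall>e>0. \<exists>B. finite B \<and> (\<forall>C. finite C \<longrightarrow> B \<subseteq> C \<longrightarrow> av (s - sum u C) \<le> e))"

definition vanishing :: "('b \<Rightarrow> 'a) \<Rightarrow> bool" where
  "vanishing u \<longleftrightarrow> (\<forall>e>0. finite {i. e \<le> av (u i)})"

lemma has_usumD:
  "has_usum u s \<Longrightarrow> e > 0 \<Longrightarrow>
     \<exists>B. finite B \<and> (\<forall>C. finite C \<longrightarrow> B \<subseteq> C \<longrightarrow> av (s - sum u C) \<le> e)"
  unfolding has_usum_def by blast

lemma has_usumI:
  assumes "\<And>e. e > 0 \<Longrightarrow> \<exists>B. finite B \<and> (\<forall>C. finite C \<longrightarrow> B \<subseteq> C \<longrightarrow> av (s - sum u C) \<le> e)"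
  shows "has_usum u s"
  using assms unfolding has_usum_def by blast

lemma has_usum_unique:
  assumes s: "has_usum u s" and t: "has_usum u t"
  shows "s = t"
proof -
  have "av (s - t) \<le> e" if "e > 0" for e
  proof -
    obtain B1 where B1: "finite B1" "\<And>C. finite C \<Longrightarrow> B1 \<subseteq> C \<Longrightarrow> av (s - sum u C) \<le> e"
      using has_usumD[OF s \<open>e > 0\<close>] by blast
    obtain B2 where B2: "finite B2" "\<And>C. finite C \<Longrightarrow> B2 \<subseteq> C \<Longrightarrow> av (t - sum u C) \<le> e"
      using has_usumD[OF t \<open>e > 0\<close>] by blast
    have "s - t = (s - sum u (B1 \<union> B2)) - (t - sum u (B1 \<union> B2))"
      by simp
    then show ?thesis
      using B1 B2 by (metis av_diff_le finite_UnI sup.cobounded1 sup.cobounded2)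
  qed
  then have "av (s - t) \<le> 0"
    by (rule field_le_epsilon) simp
  then show "s = t"
    using av_nonneg[of "s - t"] by simp
qed

lemma has_usum_finite:
  assumes "finite F" "\<And>i. i \<notin> F \<Longrightarrow> u i = 0"
  shows "has_usum u (sum u F)"
proof (rule has_usumI, intro exI conjI allI impI)
  fix e :: real and C assume "e > 0" "finite C" "F \<subseteq> C"
  then have "sum u C = sum u F"
    using assms by (intro sum.mono_neutral_right) auto
  then show "av (sum u F - sum u C) \<le> e"
    using \<open>e > 0\<close> by simp
qed (rule assms)

lemma has_usum_add:
  assumes s: "has_usum u s" and t: "has_usum v t"
  shows "has_usum (\<lambda>i. u i + v i) (s + t)"
proof (rule has_usumI)
  fix e :: real assume "e > 0"
  obtain B1 where B1: "finite B1" "\<And>C. finite C \<Longrightarrow> B1 \<subseteq> C \<Longrightarrow> av (s - sum u C) \<le> e"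
    using has_usumD[OF s \<open>e > 0\<close>] by blast
  obtain B2 where B2: "finite B2" "\<And>C. finite C \<Longrightarrow> B2 \<subseteq> C \<Longrightarrow> av (t - sum v C) \<le> e"
    using has_usumD[OF t \<open>e > 0\<close>] by blast
  have "av (s + t - sum (\<lambda>i. u i + v i) C) \<le> e" if "finite C" "B1 \<union> B2 \<subseteq> C" for C
  proof -
    have eq: "s + t - sum (\<lambda>i. u i + v i) C = (s - sum u C) + (t - sum v C)"
      by (simp add: sum.distrib)
    show ?thesis
      unfolding eq using B1(2)[of C] B2(2)[of C] that by (intro av_add_le) auto
  qed
  then show "\<exists>B. finite B \<and> (\<forall>C. finite C \<longrightarrow> B \<subseteq> C \<longrightarrow> av (s + t - sum (\<lambda>i. u i + v i) C) \<le> e)"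
    using B1(1) B2(1) by blast
qed

lemma has_usum_cmult:
  assumes s: "has_usum u s"
  shows "has_usum (\<lambda>i. c * u i) (c * s)"
proof (cases "c = 0")
  case False
  show ?thesis
  proof (rule has_usumI)
    fix e :: real assume "e > 0"
    then obtain B where B: "finite B" "\<And>C. finite C \<Longrightarrow> B \<subseteq> C \<Longrightarrow> av (s - sum u C) \<le> e / av c"
      using has_usumD[OF s, of "e / av c"] False by (auto intro: divide_pos_pos av_pos)
    have "av (c * s - sum (\<lambda>i. c * u i) C) \<le> e" if "finite C" "B \<subseteq> C" for C
    proof -
      have "c * s - sum (\<lambda>i. c * u i) C = c * (s - sum u C)"
        by (simp add: sum_distrib_left right_diff_distrib)
      moreover have "av c * av (s - sum u C) \<le> e"
        using B(2)[OF that] av_pos[OF False] by (simp add: le_divide_eq mult.commute)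
      ultimately show ?thesis
        by simp
    qed
    then show "\<exists>B. finite B \<and> (\<forall>C. finite C \<longrightarrow> B \<subseteq> C \<longrightarrow> av (c * s - sum (\<lambda>i. c * u i) C) \<le> e)"
      using B(1) by blast
  qed
qed (auto simp: has_usum_def)

lemma has_usum_mult_right: "has_usum u s \<Longrightarrow> has_usum (\<lambda>i. u i * c) (s * c)"
  using has_usum_cmult[of u s c] by (simp add: mult.commute)

lemma has_usum_cong:
  assumes "has_usum u s" "\<And>i. u i = v i"
  shows "has_usum v s"
proof -
  have "u = v"
    using assms(2) by (rule ext)
  then show ?thesis
    using assms(1) by simp
qed

lemma has_usum_reindex:
  assumes h: "bij h" and s: "has_usum (u \<circ> h) s"
  shows "has_usum u s"
proof (rule has_usumI)
  fix e :: real assume "e > 0"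
  then obtain B where B: "finite B" "\<And>C. finite C \<Longrightarrow> B \<subseteq> C \<Longrightarrow> av (s - sum (u \<circ> h) C) \<le> e"
    using has_usumD[OF s] by blast
  have "av (s - sum u C) \<le> e" if "finite C" "h ` B \<subseteq> C" for C
  proof -
    have "inj h"
      using h bij_is_inj by blast
    have "sum u C = sum u (h ` (h -` C))"
      using h by (simp add: bij_def surj_image_vimage_eq)
    also have "\<dots> = sum (u \<circ> h) (h -` C)"
      using sum.reindex[OF inj_on_subset[OF \<open>inj h\<close> subset_UNIV]] by blast
    finally have "sum u C = sum (u \<circ> h) (h -` C)" .
    moreover have "finite (h -` C)"
      using \<open>inj h\<close> \<open>finite C\<close> by (simp add: finite_vimageI)
    moreover have "B \<subseteq> h -` C"
      using that(2) by auto
    ultimately show ?thesis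
      using B(2) by simp
  qed
  then show "\<exists>B. finite B \<and> (\<forall>C. finite C \<longrightarrow> B \<subseteq> C \<longrightarrow> av (s - sum u C) \<le> e)"
    using B(1) by blast
qed

lemma av_has_usum_le:
  assumes s: "has_usum u s" and bound: "\<And>i. av (u i) \<le> M" and "0 \<le> M"
  shows "av s \<le> M"
proof (rule field_le_epsilon)
  fix e :: real assume "e > 0"
  then obtain B where "finite B" "av (s - sum u B) \<le> e"
    using has_usumD[OF s \<open>e > 0\<close>] by blast
  moreover have "av (sum u B) \<le> M"
    using bound \<open>0 \<le> M\<close> by (intro av_sum_le)
  ultimately show "av s \<le> M + e"
    using av_add_le_max[of "s - sum u B" "sum u B"] \<open>e > 0\<close> \<open>0 \<le> M\<close> by auto
qed

lemma has_usum_iterated: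
  assumes tot: "has_usum w S"
    and col: "\<And>j. has_usum (\<lambda>i. w (i, j)) (v j)"
  shows "has_usum v S"
proof (rule has_usumI)
  fix e :: real assume "e > 0"
  obtain B where B: "finite B" "\<And>C. finite C \<Longrightarrow> B \<subseteq> C \<Longrightarrow> av (S - sum w C) \<le> e"
    using has_usumD[OF tot \<open>e > 0\<close>] by blast
  have "\<exists>I. finite I \<and> fst ` B \<subseteq> I \<and> av (v j - (\<Sum>i\<in>I. w (i, j))) \<le> e" for j
  proof -
    obtain Bj where "finite Bj" "\<And>C. finite C \<Longrightarrow> Bj \<subseteq> C \<Longrightarrow> av (v j - (\<Sum>i\<in>C. w (i, j))) \<le> e"
      using has_usumD[OF col \<open>e > 0\<close>] by blast
    then show ?thesis
      using B(1) by (intro exI[of _ "Bj \<union> fst ` B"]) auto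
  qed
  then obtain I where I: "\<And>j. finite (I j)" "\<And>j. fst ` B \<subseteq> I j"
    "\<And>j. av (v j - (\<Sum>i\<in>I j. w (i, j))) \<le> e"
    by metis
  have "av (S - sum v J) \<le> e" if J: "finite J" "snd ` B \<subseteq> J" for J
  proof -
    define C where "C = (\<lambda>(j, i). (i, j)) ` Sigma J I"
    have "finite C"
      using J(1) I(1) unfolding C_def by simp
    have "B \<subseteq> C"
    proof
      fix x assume "x \<in> B"
      then have "(snd x, fst x) \<in> Sigma J I"
        using J(2) I(2) by blast
      then show "x \<in> C"
        unfolding C_def by (rule rev_image_eqI) simp
    qed
    moreover have "sum w C = (\<Sum>j\<in>J. \<Sum>i\<in>I j. w (i, j))"
      unfolding C_def using J(1) I(1)
      by (subst sum.reindex) (auto simp: inj_on_def sum.Sigma case_prod_unfold)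
    ultimately have "av (S - (\<Sum>j\<in>J. \<Sum>i\<in>I j. w (i, j))) \<le> e"
      using B(2)[OF \<open>finite C\<close> \<open>B \<subseteq> C\<close>] by simp
    moreover have "av (sum v J - (\<Sum>j\<in>J. \<Sum>i\<in>I j. w (i, j))) \<le> e"
      using I(3) \<open>e > 0\<close> by (simp add: sum_subtractf[symmetric] av_sum_le)
    ultimately have "av ((S - (\<Sum>j\<in>J. \<Sum>i\<in>I j. w (i, j)))
        - (sum v J - (\<Sum>j\<in>J. \<Sum>i\<in>I j. w (i, j)))) \<le> e"
      by (rule av_diff_le)
    then show ?thesis
      by simp
  qed
  then show "\<exists>B. finite B \<and> (\<forall>J. finite J \<longrightarrow> B \<subseteq> J \<longrightarrow> av (S - sum v J) \<le> e)"
    using B(1) by blast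
qed

lemma av_sum_diff_le:
  assumes "finite C" "finite D" "\<And>i. i \<in> (C - D) \<union> (D - C) \<Longrightarrow> av (u i) \<le> e" "0 \<le> e"
  shows "av (sum u C - sum u D) \<le> e"
  unfolding sum_diff_eq_sum_set_diffs[OF assms(1,2)] using assms(3,4)
  by (intro av_diff_le av_sum_le) auto

lemma av_sum_large_terms_diff_le:
  assumes "vanishing u" "N \<le> M" "finite C" "{i. 1 / real (Suc N) \<le> av (u i)} \<subseteq> C"
  shows "av (sum u {i. 1 / real (Suc M) \<le> av (u i)} - sum u C) \<le> 1 / real (Suc N)"
proof (rule av_sum_diff_le)
  show "finite {i. 1 / real (Suc M) \<le> av (u i)}"
    using assms(1) unfolding vanishing_def by simp
  have "1 / real (Suc M) \<le> 1 / real (Suc N)"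
    using assms(2) by (simp add: frac_le)
  moreover fix i assume "i \<in> {i. 1 / real (Suc M) \<le> av (u i)} - C \<union> (C - {i. 1 / real (Suc M) \<le> av (u i)})"
  then have "i \<notin> {i. 1 / real (Suc N) \<le> av (u i)} \<or> i \<notin> {i. 1 / real (Suc M) \<le> av (u i)}"
    using assms(4) by blast
  then have "av (u i) < 1 / real (Suc N) \<or> av (u i) < 1 / real (Suc M)"
    by auto
  ultimately show "av (u i) \<le> 1 / real (Suc N)"
    by linarith
qed (use assms(3) in simp_all)

end

locale complete_nonarch_field = nonarch_field +
  assumes complete: "complete_abs av"
begin

lemma vanishing_has_usum:
  assumes "vanishing u"
  obtains s where "has_usum u s"
proof -
  define Cs where "Cs N = {i. 1 / real (Suc N) \<le> av (u i)}" for N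
  have finite_Cs: "finite (Cs N)" for N
    using assms unfolding vanishing_def Cs_def by auto
  have S_close: "av (sum u (Cs M) - sum u C) \<le> 1 / real (Suc N)"
    if "N \<le> M" "finite C" "Cs N \<subseteq> C" for N M C
    using av_sum_large_terms_diff_le[OF assms that(1,2) that(3)[unfolded Cs_def]] unfolding Cs_def .
  have Cs_mono: "Cs N \<subseteq> Cs M" if "N \<le> M" for N M
  proof -
    have "1 / real (Suc M) \<le> 1 / real (Suc N)"
      using that by (simp add: frac_le)
    then show ?thesis
      unfolding Cs_def by auto
  qed
  have "\<forall>e>0. \<exists>N. \<forall>m\<ge>N. \<forall>n\<ge>N. av (sum u (Cs m) - sum u (Cs n)) < e"
  proof (intro allI impI)
    fix e :: real assume "e > 0"
    then obtain N where N: "1 / real (Suc N) < e"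
      by (metis nat_approx_posE)
    have "av (sum u (Cs m) - sum u (Cs n)) < e" if "N \<le> m" "N \<le> n" for m n
      using S_close[of N m "Cs n"] that finite_Cs Cs_mono N by fastforce
    then show "\<exists>N. \<forall>m\<ge>N. \<forall>n\<ge>N. av (sum u (Cs m) - sum u (Cs n)) < e"
      by blast
  qed
  then obtain L where L: "(\<lambda>n. av (sum u (Cs n) - L)) \<longlonglongrightarrow> 0"
    using complete[unfolded complete_abs_def, rule_format, of "\<lambda>n. sum u (Cs n)"] by blast
  have "has_usum u L"
  proof (rule has_usumI)
    fix e :: real assume "e > 0"
    then obtain N where N: "1 / real (Suc N) < e"
      by (metis nat_approx_posE)
    obtain M where M: "\<And>n. n \<ge> M \<Longrightarrow> av (sum u (Cs n) - L) < e"
      using L \<open>e > 0\<close> unfolding lim_sequentially dist_real_def by force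
    have "av (L - sum u C) \<le> e" if "finite C" "Cs N \<subseteq> C" for C
    proof -
      have "av (sum u (Cs (max M N)) - sum u C) \<le> e" "av (sum u (Cs (max M N)) - L) \<le> e"
        using S_close[of N "max M N" C] that N M[of "max M N"] by simp_all
      then have "av ((sum u (Cs (max M N)) - sum u C) - (sum u (Cs (max M N)) - L)) \<le> e"
        by (rule av_diff_le)
      then show ?thesis
        by simp
    qed
    then show "\<exists>B. finite B \<and> (\<forall>C. finite C \<longrightarrow> B \<subseteq> C \<longrightarrow> av (L - sum u C) \<le> e)"
      using finite_Cs by blast
  qed
  then show thesis
    by (rule that)
qed

lemma has_usum_symmetric_partial_sums:
  fixes u :: "int \<Rightarrow> 'a"
  assumes "has_usum u s"
  shows "(\<lambda>N. av (sum u {- int N..int N} - s)) \<longlonglongrightarrow> 0"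
proof (rule LIMSEQ_I)
  fix r :: real assume "r > 0"
  then obtain B where B: "finite B" "\<And>C. finite C \<Longrightarrow> B \<subseteq> C \<Longrightarrow> av (s - sum u C) \<le> r / 2"
    using has_usumD[OF assms, of "r / 2"] by auto
  obtain N0 where N0: "B \<subseteq> {- int N0..int N0}"
    using finite_int_subset_interval[OF B(1)] by blast
  have "av (sum u {- int n..int n} - s) < r" if "N0 \<le> n" for n
  proof -
    have "B \<subseteq> {- int n..int n}"
      using N0 that by auto
    then show ?thesis
      using B(2)[of "{- int n..int n}"] \<open>r > 0\<close> by (simp add: av_diff_commute)
  qed
  then show "\<exists>no. \<forall>n\<ge>no. norm (av (sum u {- int n..int n} - s) - 0) < r"
    by auto
qed

end

section \<open>The ring \<open>\<E>\<^sub>K\<close> and the Gauss norm\<close>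

context nonarch_field
begin

abbreviation EK where "EK \<equiv> in_EK av"
abbreviation gnorm where "gnorm \<equiv> gauss_norm av"

lemma EK_bounded:
  assumes "EK a"
  obtains R where "0 < R" "\<And>i. av (a i) \<le> R"
proof -
  obtain R where "\<And>i. av (a i) \<le> R"
    using assms unfolding in_EK_def bdd_above_def by auto
  then show thesis
    by (intro that[of "max R 1"]) (auto simp: le_max_iff_disj)
qed

lemma EK_tail:
  assumes "EK a" "e > 0"
  obtains N :: int where "\<And>i. i < N \<Longrightarrow> av (a i) < e"
proof -
  have "(\<lambda>n::nat. av (a (- int n))) \<longlonglongrightarrow> 0"
    using assms(1) unfolding in_EK_def by blast
  then obtain N where N: "\<And>n. n \<ge> N \<Longrightarrow> av (a (- int n)) < e"
    using assms(2) unfolding lim_sequentially dist_real_def by force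
  have "av (a i) < e" if "i < - int N" for i
    using N[of "nat (- i)"] that by simp
  then show thesis
    by (rule that)
qed

lemma EK_intro:
  assumes "\<And>i. av (a i) \<le> R" "\<And>e. e > 0 \<Longrightarrow> \<exists>N::int. \<forall>i<N. av (a i) < e"
  shows "EK a"
  unfolding in_EK_def
proof
  show "bdd_above (range (\<lambda>i. av (a i)))"
    using assms(1) by (intro bdd_aboveI[of _ R]) auto
  show "(\<lambda>n::nat. av (a (- int n))) \<longlonglongrightarrow> 0"
  proof (rule LIMSEQ_I)
    fix r :: real assume "r > 0"
    then obtain N where "\<forall>i<N. av (a i) < r"
      using assms(2) by blast
    then show "\<exists>no. \<forall>n\<ge>no. norm (av (a (- int n)) - 0) < r"
      by (intro exI[of _ "nat (1 - N)"]) auto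
  qed
qed

lemma gnorm_upper: "EK a \<Longrightarrow> av (a i) \<le> gnorm a"
  unfolding gauss_norm_def in_EK_def by (auto intro: cSUP_upper)

lemma gnorm_least: "(\<And>i. av (a i) \<le> M) \<Longrightarrow> gnorm a \<le> M"
  unfolding gauss_norm_def by (rule cSUP_least) auto

lemma gnorm_nonneg: "EK a \<Longrightarrow> 0 \<le> gnorm a"
  using gnorm_upper[of a 0] av_nonneg[of "a 0"] by linarith

lemma EK_one: "EK ls_one"
  by (rule EK_intro[where R = 1]) (auto simp: ls_one_def intro: exI[of _ 0])

lemma gnorm_one: "gnorm ls_one = 1"
  using gnorm_least[of ls_one 1] gnorm_upper[OF EK_one, of 0] by (simp add: ls_one_def)

lemma EK_add:
  assumes a: "EK a" and b: "EK b"
  shows "EK (\<lambda>i. a i + b i)"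
proof -
  obtain Ra where Ra: "\<And>i. av (a i) \<le> Ra"
    using EK_bounded[OF a] by metis
  obtain Rb where Rb: "\<And>i. av (b i) \<le> Rb"
    using EK_bounded[OF b] by metis
  show ?thesis
  proof (rule EK_intro[where R = "max Ra Rb"])
    show "av (a i + b i) \<le> max Ra Rb" for i
      using Ra[of i] Rb[of i] by (intro av_add_le) auto
  next
    fix e :: real assume "e > 0"
    obtain Na where "\<And>i. i < Na \<Longrightarrow> av (a i) < e"
      using EK_tail[OF a \<open>e > 0\<close>] by metis
    moreover obtain Nb where "\<And>i. i < Nb \<Longrightarrow> av (b i) < e"
      using EK_tail[OF b \<open>e > 0\<close>] by metis
    ultimately have "\<forall>i < min Na Nb. av (a i + b i) < e"
      using av_add_le_max by (metis le_less_trans max_less_iff_conj min_less_iff_conj)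
    then show "\<exists>N. \<forall>i<N. av (a i + b i) < e" ..
  qed
qed

lemma EK_cmult:
  assumes a: "EK a" and c: "\<And>i. av (c i) \<le> 1"
  shows "EK (\<lambda>i. c i * a i)"
proof -
  have le: "av (c i * a i) \<le> av (a i)" for i
    using c[of i] by (simp add: mult_left_le_one_le)
  obtain R where "\<And>i. av (a i) \<le> R"
    using EK_bounded[OF a] by metis
  then show ?thesis
  proof (intro EK_intro[where R = R])
    fix e :: real assume "e > 0"
    then obtain N where "\<And>i. i < N \<Longrightarrow> av (a i) < e"
      using EK_tail[OF a] by metis
    then show "\<exists>N. \<forall>i<N. av (c i * a i) < e"
      using le le_less_trans by blast
  qed (use le order_trans in blast)
qed

lemma EK_smult:
  assumes a: "EK a"
  shows "EK (\<lambda>i. c * a i)"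
proof (cases "c = 0")
  case False
  obtain R where R: "\<And>i. av (a i) \<le> R"
    using EK_bounded[OF a] by metis
  show ?thesis
  proof (rule EK_intro[where R = "av c * R"])
    show "av (c * a i) \<le> av c * R" for i
      using R by (simp add: mult_left_mono)
  next
    fix e :: real assume "e > 0"
    then obtain N where N: "\<And>i. i < N \<Longrightarrow> av (a i) < e / av c"
      using EK_tail[OF a] av_pos[OF False] by (metis divide_pos_pos)
    have "av (c * a i) < e" if "i < N" for i
      using N[OF that] av_pos[OF False] by (simp add: less_divide_eq mult.commute)
    then show "\<exists>N. \<forall>i<N. av (c * a i) < e"
      by blast
  qed
qed (auto intro: EK_intro[where R = 0])

lemma EK_sum: "(\<And>k. k \<in> S \<Longrightarrow> EK (f k)) \<Longrightarrow> EK (\<lambda>i. \<Sum>k\<in>S. f k i)"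
proof (induction S rule: infinite_finite_induct)
  case (insert x F)
  then show ?case
    using EK_add[of "f x" "\<lambda>i. \<Sum>k\<in>F. f k i"] by simp
qed (auto intro: EK_intro[where R = 0])

lemma EK_divT: "EK a \<Longrightarrow> EK (ls_divT a)"
proof -
  assume a: "EK a"
  obtain R where "\<And>i. av (a i) \<le> R"
    using EK_bounded[OF a] by metis
  then show ?thesis
    unfolding ls_divT_def
  proof (intro EK_intro[where R = R])
    fix e :: real assume "e > 0"
    then obtain N where "\<And>i. i < N \<Longrightarrow> av (a i) < e"
      using EK_tail[OF a] by metis
    then show "\<exists>N. \<forall>i<N. av (a (i + 1)) < e"
      by (intro exI[of _ "N - 1"]) auto
  qed
qed

lemma gnorm_divT: "EK a \<Longrightarrow> gnorm (ls_divT a) \<le> gnorm a"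
  unfolding ls_divT_def by (intro gnorm_least gnorm_upper)

lemma gnorm_add: "EK a \<Longrightarrow> EK b \<Longrightarrow> gnorm (\<lambda>i. a i + b i) \<le> max (gnorm a) (gnorm b)"
  by (intro gnorm_least av_add_le) (auto intro: le_max_iff_disj[THEN iffD2] gnorm_upper)

end

section \<open>Products of Laurent series\<close>

context nonarch_field
begin

lemma EK_products_small:
  assumes a: "EK a" and b: "EK b" and "e > 0"
  obtains N :: int where "\<And>i j. i < N \<or> j < N \<Longrightarrow> av (a i) * av (b j) < e"
proof -
  obtain Ra where Ra: "0 < Ra" "\<And>i. av (a i) \<le> Ra"
    using EK_bounded[OF a] by metis
  obtain Rb where Rb: "0 < Rb" "\<And>i. av (b i) \<le> Rb"
    using EK_bounded[OF b] by metis
  obtain Na where Na: "\<And>i. i < Na \<Longrightarrow> av (a i) < e / Rb"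
    using EK_tail[OF a] \<open>e > 0\<close> Rb(1) by (metis divide_pos_pos)
  obtain Nb where Nb: "\<And>i. i < Nb \<Longrightarrow> av (b i) < e / Ra"
    using EK_tail[OF b] \<open>e > 0\<close> Ra(1) by (metis divide_pos_pos)
  have "av (a i) * av (b j) < e" if "i < min Na Nb \<or> j < min Na Nb" for i j
    using that
  proof
    assume "i < min Na Nb"
    then have "av (a i) * av (b j) \<le> av (a i) * Rb" "av (a i) * Rb < e"
      using Na[of i] Rb by (auto intro: mult_left_mono simp: less_divide_eq)
    then show ?thesis by linarith
  next
    assume "j < min Na Nb"
    then have "av (a i) * av (b j) \<le> Ra * av (b j)" "Ra * av (b j) < e"
      using Nb[of j] Ra by (auto intro: mult_right_mono simp: less_divide_eq mult.commute)
    then show ?thesis by linarith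
  qed
  then show thesis
    by (rule that)
qed

lemma EK_triple_products_small:
  assumes a: "EK a" and b: "EK b" and c: "EK c" and "e > 0"
  obtains N :: int where
    "\<And>i j k. i < N \<or> j < N \<or> k < N \<Longrightarrow> av (a i) * av (b j) * av (c k) < e"
proof -
  obtain Rc where Rc: "0 < Rc" "\<And>k. av (c k) \<le> Rc"
    using EK_bounded[OF c] by metis
  obtain Nab where Nab: "\<And>i j. i < Nab \<or> j < Nab \<Longrightarrow> av (a i) * av (b j) < e / Rc"
    using EK_products_small[OF a b] \<open>e > 0\<close> Rc(1) by (metis divide_pos_pos)
  obtain R where R: "0 < R" "\<And>i j. av (a i) * av (b j) \<le> R"
  proof -
    obtain Ra where "0 < Ra" "\<And>i. av (a i) \<le> Ra"
      using EK_bounded[OF a] by metis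
    moreover obtain Rb where "0 < Rb" "\<And>i. av (b i) \<le> Rb"
      using EK_bounded[OF b] by metis
    ultimately show thesis
      by (intro that[of "Ra * Rb"]) (auto intro: mult_mono)
  qed
  obtain Nc where Nc: "\<And>k. k < Nc \<Longrightarrow> av (c k) < e / R"
    using EK_tail[OF c] \<open>e > 0\<close> R(1) by (metis divide_pos_pos)
  have "av (a i) * av (b j) * av (c k) < e" if "i < min Nab Nc \<or> j < min Nab Nc \<or> k < min Nab Nc"
    for i j k
  proof (cases "k < Nc")
    case True
    have "av (a i) * av (b j) * av (c k) \<le> R * av (c k)"
      using R(2) by (rule mult_right_mono) simp
    moreover have "R * av (c k) < e"
      using Nc[OF True] R(1) by (simp add: less_divide_eq mult.commute)
    ultimately show ?thesis by linarith
  next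
    case False
    then have "av (a i) * av (b j) < e / Rc"
      using that by (intro Nab) auto
    then have "av (a i) * av (b j) * av (c k) \<le> av (a i) * av (b j) * Rc"
      "av (a i) * av (b j) * Rc < e"
      using Rc by (auto intro: mult_left_mono simp: less_divide_eq)
    then show ?thesis by linarith
  qed
  then show thesis
    by (rule that)
qed

lemma vanishing_convolution:
  assumes "EK a" "EK b"
  shows "vanishing (\<lambda>i. a i * b (n - i))"
  unfolding vanishing_def
proof (intro allI impI)
  fix e :: real assume "e > 0"
  then obtain N where N: "\<And>i j. i < N \<or> j < N \<Longrightarrow> av (a i) * av (b j) < e"
    using EK_products_small[OF assms] by metis
  have "{i. e \<le> av (a i * b (n - i))} \<subseteq> {N..n - N}"
    using N by (force simp: not_less[symmetric])
  then show "finite {i. e \<le> av (a i * b (n - i))}"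
    by (rule finite_subset) simp
qed

lemma vanishing_triple_convolution:
  assumes "EK a" "EK b" "EK c"
  shows "vanishing (\<lambda>(i, j). a i * b (j - i) * c (n - j))"
  unfolding vanishing_def
proof (intro allI impI)
  fix e :: real assume "e > 0"
  then obtain N where N: "\<And>i j k. i < N \<or> j < N \<or> k < N \<Longrightarrow> av (a i) * av (b j) * av (c k) < e"
    using EK_triple_products_small[OF assms] by metis
  have "{x. e \<le> av ((\<lambda>(i, j). a i * b (j - i) * c (n - j)) x)} \<subseteq> {N..n - 2 * N} \<times> {2 * N..n - N}"
  proof (clarify)
    fix i j assume "e \<le> av (a i * b (j - i) * c (n - j))"
    then have "\<not> (i < N \<or> j - i < N \<or> n - j < N)"
      using N[of i "j - i" "n - j"] by auto
    then show "i \<in> {N..n - 2 * N} \<and> j \<in> {2 * N..n - N}"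
      by auto
  qed
  then show "finite {x. e \<le> av ((\<lambda>(i, j). a i * b (j - i) * c (n - j)) x)}"
    by (rule finite_subset) simp
qed

end

context complete_nonarch_field
begin

abbreviation mul where "mul \<equiv> ls_mult av"

lemma mul_has_usum:
  assumes "EK a" "EK b"
  shows "has_usum (\<lambda>i. a i * b (n - i)) (mul a b n)"
proof -
  obtain s where s: "has_usum (\<lambda>i. a i * b (n - i)) s"
    using vanishing_has_usum[OF vanishing_convolution[OF assms]] .
  then have "mul a b n = s"
    unfolding ls_mult_def by (intro av_lim_eq has_usum_symmetric_partial_sums)
  then show ?thesis
    using s by simp
qed

lemma mul_eqI:
  "EK a \<Longrightarrow> EK b \<Longrightarrow> has_usum (\<lambda>i. a i * b (n - i)) s \<Longrightarrow> mul a b n = s"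
  using has_usum_unique mul_has_usum by blast

lemma av_mul_le:
  assumes "EK a" "EK b" "\<And>i j. av (a i) * av (b j) \<le> M" "0 \<le> M"
  shows "av (mul a b n) \<le> M"
  using av_has_usum_le[OF mul_has_usum[OF assms(1,2)]] assms(3,4) by simp

lemma gnorm_mul:
  assumes a: "EK a" and b: "EK b"
  shows "gnorm (mul a b) \<le> gnorm a * gnorm b"
  using gnorm_upper[OF a] gnorm_upper[OF b] gnorm_nonneg[OF a] gnorm_nonneg[OF b]
  by (intro gnorm_least av_mul_le[OF a b] mult_mono) auto

lemma EK_mul:
  assumes a: "EK a" and b: "EK b"
  shows "EK (mul a b)"
proof -
  obtain Ra where Ra: "0 < Ra" "\<And>i. av (a i) \<le> Ra"
    using EK_bounded[OF a] by metis
  obtain Rb where Rb: "0 < Rb" "\<And>i. av (b i) \<le> Rb"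
    using EK_bounded[OF b] by metis
  show ?thesis
  proof (rule EK_intro[where R = "Ra * Rb"])
    show "av (mul a b n) \<le> Ra * Rb" for n
      using Ra Rb by (intro av_mul_le[OF a b] mult_mono) auto
  next
    fix e :: real assume "e > 0"
    then obtain N where N: "\<And>i j. i < N \<or> j < N \<Longrightarrow> av (a i) * av (b j) < e / 2"
      using EK_products_small[OF a b, of "e / 2"] by auto
    have "av (mul a b n) \<le> e / 2" if "n < N + N" for n
    proof (rule av_has_usum_le[OF mul_has_usum[OF a b]])
      fix i
      have "i < N \<or> n - i < N"
        using that by linarith
      then show "av (a i * b (n - i)) \<le> e / 2"
        using N[of i "n - i"] by simp
    qed (use \<open>e > 0\<close> in simp)
    then show "\<exists>N. \<forall>n<N. av (mul a b n) < e"
      using \<open>e > 0\<close> by (intro exI[of _ "N + N"]) force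
  qed
qed

lemma mul_commute:
  assumes a: "EK a" and b: "EK b"
  shows "mul a b = mul b a"
proof
  fix n
  have "has_usum ((\<lambda>i. b i * a (n - i)) \<circ> (\<lambda>i. n - i)) (mul a b n)"
    by (rule has_usum_cong[OF mul_has_usum[OF a b]]) (simp add: mult.commute)
  then have "has_usum (\<lambda>i. b i * a (n - i)) (mul a b n)"
    by (rule has_usum_reindex[rotated]) (rule o_bij[where g = "\<lambda>i. n - i"]; auto)
  then show "mul a b n = mul b a n"
    using mul_eqI[OF b a] by simp
qed

lemma mul_add_left:
  assumes a: "EK a" and b: "EK b" and c: "EK c"
  shows "mul (\<lambda>i. a i + b i) c n = mul a c n + mul b c n"
  by (intro mul_eqI EK_add a b c has_usum_cong[OF has_usum_add[OF mul_has_usum[OF a c] mul_has_usum[OF b c]]])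
    (simp add: distrib_right)

lemma mul_smult_left:
  assumes a: "EK a" and c: "EK c"
  shows "mul (\<lambda>i. k * a i) c n = k * mul a c n"
  by (intro mul_eqI EK_smult a c has_usum_cong[OF has_usum_cmult[OF mul_has_usum[OF a c]]])
    (simp add: mult.assoc)

lemma mul_add_right:
  assumes "EK a" "EK b" "EK c"
  shows "mul c (\<lambda>i. a i + b i) n = mul c a n + mul c b n"
  using mul_add_left[OF assms, of n] mul_commute[OF assms(3) EK_add[OF assms(1,2)]]
    mul_commute[OF assms(3,1)] mul_commute[OF assms(3,2)] by simp

lemma mul_sum_left:
  assumes "\<And>k. k \<in> S \<Longrightarrow> EK (f k)" "EK c"
  shows "mul (\<lambda>i. \<Sum>k\<in>S. f k i) c n = (\<Sum>k\<in>S. mul (f k) c n)"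
  using assms(1)
proof (induction S rule: infinite_finite_induct)
  case (insert x F)
  then show ?case
    using mul_add_left[OF _ EK_sum assms(2), of "f x" F f n] by simp
qed (use mul_smult_left[OF EK_one assms(2), of 0 n] in simp_all)

lemma mul_one_right: "EK a \<Longrightarrow> mul a ls_one n = a n"
  using mul_eqI[OF _ EK_one has_usum_finite[of "{n}" "\<lambda>i. a i * ls_one (n - i)"]]
  by (simp add: ls_one_def)

lemma mul_divT_left:
  assumes a: "EK a" and b: "EK b"
  shows "ls_divT (mul a b) n = mul (ls_divT a) b n"
proof -
  have "has_usum ((\<lambda>i. a i * b (n + 1 - i)) \<circ> (\<lambda>i. i + 1)) (mul (ls_divT a) b n)"
    by (rule has_usum_cong[OF mul_has_usum[OF EK_divT[OF a] b]]) (simp add: ls_divT_def)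
  then have "has_usum (\<lambda>i. a i * b (n + 1 - i)) (mul (ls_divT a) b n)"
    by (rule has_usum_reindex[rotated]) (rule o_bij[where g = "\<lambda>i. i - 1"]; auto)
  then show ?thesis
    unfolding ls_divT_def using mul_eqI[OF a b] by simp
qed

text \<open>Both sides are the sum of the vanishing family \<open>a\<^sub>i b\<^sub>j\<^sub>-\<^sub>i c\<^sub>n\<^sub>-\<^sub>j\<close>,
  summed first over \<open>i\<close> and first over \<open>j\<close> respectively.\<close>
lemma mul_assoc:
  assumes a: "EK a" and b: "EK b" and c: "EK c"
  shows "mul (mul a b) c n = mul a (mul b c) n"
proof -
  define w where "w = (\<lambda>(i, j). a i * b (j - i) * c (n - j))"
  obtain S where S: "has_usum w S"
    using vanishing_has_usum[OF vanishing_triple_convolution[OF a b c, of n]] unfolding w_def .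
  have "has_usum (\<lambda>i. w (i, j)) (mul a b j * c (n - j))" for j
    unfolding w_def using has_usum_mult_right[OF mul_has_usum[OF a b, of j]] by simp
  then have "has_usum (\<lambda>j. mul a b j * c (n - j)) S"
    by (rule has_usum_iterated[OF S])
  then have left: "mul (mul a b) c n = S"
    by (rule mul_eqI[OF EK_mul[OF a b] c])
  have "has_usum (w \<circ> (\<lambda>(j, i). (i, j))) S"
    by (rule has_usum_reindex[of "\<lambda>(i, j). (j, i)", OF _ has_usum_cong[OF S]])
      (auto simp: bij_def inj_on_def image_iff)
  moreover have "has_usum (\<lambda>j. (w \<circ> (\<lambda>(j, i). (i, j))) (j, i)) (a i * mul b c (n - i))" for i
  proof -
    have "has_usum ((\<lambda>j. b (j - i) * c (n - j)) \<circ> (\<lambda>k. k + i)) (mul b c (n - i))"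
      by (rule has_usum_cong[OF mul_has_usum[OF b c, of "n - i"]]) (simp add: algebra_simps)
    then have "has_usum (\<lambda>j. b (j - i) * c (n - j)) (mul b c (n - i))"
      by (rule has_usum_reindex[rotated]) (rule o_bij[where g = "\<lambda>k. k - i"]; auto)
    from has_usum_cmult[OF this, of "a i"] show ?thesis
      unfolding w_def by (simp add: mult.assoc)
  qed
  ultimately have "has_usum (\<lambda>i. a i * mul b c (n - i)) S"
    by (rule has_usum_iterated)
  then have right: "mul a (mul b c) n = S"
    by (rule mul_eqI[OF a EK_mul[OF b c]])
  show ?thesis
    using left right by simp
qed

end

section \<open>\<open>q\<close>-integers and \<open>q\<close>-factorials\<close>

locale q_nonarch_field = nonarch_field +
  fixes q :: 'a
  assumes q_close_to_1: "av (q - 1) < 1"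
    and q_not_root_of_unity: "\<forall>n>0. q ^ n \<noteq> 1"
begin

lemma q_ne_1: "q \<noteq> 1"
  using q_not_root_of_unity by (metis power_one_right zero_less_one)

lemma av_q [simp]: "av q = 1"
  using q_close_to_1 by (rule av_eq_1_of_close_to_1)

lemma q_ne_0: "q \<noteq> 0"
  using av_q by force

lemma av_q_minus_1_pos: "0 < av (q - 1)"
  using q_ne_1 by (simp add: av_pos)

definition q_zint :: "int \<Rightarrow> 'a" where
  "q_zint i = (q powi i - 1) / (q - 1)"

lemma q_zint_of_nat [simp]: "q_zint (int n) = q_int q n"
  unfolding q_zint_def q_int_def by simp

lemma q_zint_0 [simp]: "q_zint 0 = 0"
  unfolding q_zint_def by simp

lemma q_int_eq_sum: "q_int q n = (\<Sum>k<n. q ^ k)"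
  unfolding q_int_def using geometric_sum[OF q_ne_1, of n] by simp

lemma av_q_int_le_1: "av (q_int q n) \<le> 1"
  unfolding q_int_eq_sum by (rule av_sum_le) auto

lemma q_zint_uminus: "q_zint (- i) = - (q powi (- i)) * q_zint i"
proof -
  have "q powi (- i) - 1 = - (q powi (- i)) * (q powi i - 1)"
    using q_ne_0 by (simp add: power_int_minus algebra_simps)
  then show ?thesis
    unfolding q_zint_def by (simp add: divide_simps)
qed

lemma av_q_zint_uminus [simp]: "av (q_zint (- i)) = av (q_zint i)"
  using q_zint_uminus[of i] by simp

lemma av_q_zint_le_1: "av (q_zint i) \<le> 1"
proof (cases "i \<ge> 0")
  case True
  then show ?thesis
    using av_q_int_le_1[of "nat i"] q_zint_of_nat[of "nat i"] by simp
next
  case False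
  then show ?thesis
    using av_q_int_le_1[of "nat (- i)"] q_zint_of_nat[of "nat (- i)"] av_q_zint_uminus[of i] by simp
qed

lemma q_int_add: "q_int q (m + j) = q_int q j + q ^ j * q_int q m"
proof -
  have "q ^ (m + j) - 1 = (q ^ j - 1) + q ^ j * (q ^ m - 1)"
    by (simp add: power_add algebra_simps)
  then show ?thesis
    unfolding q_int_def by (simp only: add_divide_distrib times_divide_eq_right)
qed

lemma q_int_ne_0: "n > 0 \<Longrightarrow> q_int q n \<noteq> 0"
  unfolding q_int_def using q_not_root_of_unity q_ne_1 by auto

lemma q_fact_Suc: "q_fact q (Suc n) = q_fact q n * q_int q (Suc n)"
  unfolding q_fact_def by (simp add: prod.nat_ivl_Suc')

lemma q_fact_0 [simp]: "q_fact q 0 = 1"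
  unfolding q_fact_def by simp

lemma av_q_fact_le_1: "av (q_fact q n) \<le> 1"
  unfolding q_fact_def av_prod by (intro prod_le_1) (auto intro: av_q_int_le_1)

lemma q_fact_ne_0: "q_fact q n \<noteq> 0"
  unfolding q_fact_def using q_int_ne_0 by (auto simp: prod_zero_iff)

lemma av_q_fact_pos: "0 < av (q_fact q n)"
  using q_fact_ne_0 by (rule av_pos)

text \<open>Induction on \<open>m + j\<close>, splitting off the last factor \<open>[m + j]\<^sub>q = [j]\<^sub>q + q\<^sup>j [m]\<^sub>q\<close>.\<close>
lemma av_q_fact_add_le: "av (q_fact q (m + j)) \<le> av (q_fact q m) * av (q_fact q j)"
proof (induction "m + j" arbitrary: m j)
  case (Suc N)
  show ?case
  proof (cases "m = 0 \<or> j = 0")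
    case False
    then obtain m' j' where m: "m = Suc m'" and j: "j = Suc j'"
      by (metis not0_implies_Suc)
    have N: "N = m + j'" "N = m' + j"
      using Suc(2) m j by auto
    have "q_fact q (m + j) = q_fact q N * q_int q j + q ^ j * (q_fact q N * q_int q m)"
      using Suc(2) q_fact_Suc[of N] q_int_add[of m j] by (simp add: algebra_simps)
    moreover have "av (q_fact q N * q_int q j) \<le> av (q_fact q m) * av (q_fact q j)"
      using mult_right_mono[OF Suc(1)[OF N(1)] av_nonneg[of "q_int q j"]] q_fact_Suc[of j'] j N(1)
      by (simp add: mult.assoc)
    moreover have "av (q ^ j * (q_fact q N * q_int q m)) \<le> av (q_fact q m) * av (q_fact q j)"
      using mult_right_mono[OF Suc(1)[OF N(2)] av_nonneg[of "q_int q m"]] q_fact_Suc[of m'] m N(2)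
      by (simp add: mult_ac)
    ultimately show ?thesis
      by (simp only:) (rule av_add_le)
  qed auto
qed simp

lemma av_prod_q_int_shift_le: "av (\<Prod>i=1..j. q_int q (m + i)) \<le> av (q_fact q j)"
proof -
  have "q_fact q (m + j) = q_fact q m * (\<Prod>i=1..j. q_int q (m + i))"
    by (induction j) (simp_all add: q_fact_Suc)
  then have "av (q_fact q m) * av (\<Prod>i=1..j. q_int q (m + i)) \<le> av (q_fact q m) * av (q_fact q j)"
    using av_q_fact_add_le[of m j] by simp
  then show ?thesis
    using av_q_fact_pos[of m] by simp
qed

text \<open>For \<open>n < 0\<close> the product either contains \<open>[0]\<^sub>q = 0\<close> or, as \<open>|[-i]\<^sub>q| = |[i]\<^sub>q|\<close>,
  has the same absolute value as a product of consecutive \<open>q\<close>-integers with positive indices.\<close>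
lemma av_prod_q_zint_shift_le: "av (\<Prod>i=1..j. q_zint (n + int i)) \<le> av (q_fact q j)"
proof (cases "n \<ge> 0")
  case True
  have "q_zint (n + int i) = q_int q (nat n + i)" for i
    using True q_zint_of_nat[of "nat n + i"] by simp
  then show ?thesis
    using av_prod_q_int_shift_le[of "nat n" j] by simp
next
  case False
  show ?thesis
  proof (cases "n + int j \<ge> 0")
    case True
    have "nat (- n) \<in> {1..j}" "q_zint (n + int (nat (- n))) = 0"
      using False True by auto
    then have zero: "(\<Prod>i=1..j. q_zint (n + int i)) = 0"
      by (intro prod_zero) blast+
    show ?thesis
      unfolding zero using av_q_fact_pos[of j] by simp
  next
    case below: False
    define m where "m = nat (- (n + int j) - 1)"
    have "av (\<Prod>i=1..j. q_zint (n + int i)) = (\<Prod>i=1..j. av (q_zint (- (n + int i))))"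
      unfolding av_prod by (simp only: av_q_zint_uminus)
    also have "\<dots> = (\<Prod>i=1..j. av (q_zint (- (n + int (j + 1 - i)))))"
      by (rule prod.atLeastAtMost_rev)
    also have "\<dots> = (\<Prod>i=1..j. av (q_int q (m + i)))"
    proof (rule prod.cong)
      fix i assume "i \<in> {1..j}"
      then have "- (n + int (j + 1 - i)) = int (m + i)"
        using below unfolding m_def by auto
      then show "av (q_zint (- (n + int (j + 1 - i)))) = av (q_int q (m + i))"
        by (simp only: q_zint_of_nat)
    qed simp
    also have "\<dots> \<le> av (q_fact q j)"
      using av_prod_q_int_shift_le[of m j] by (simp add: av_prod)
    finally show ?thesis .
  qed
qed

end

section \<open>The operators \<open>\<sigma>\<^sub>q\<close>, \<open>\<Delta>\<^sub>q\<close> and \<open>d\<^sub>q\<close>\<close>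

locale q_laurent_series = complete_nonarch_field av + q_nonarch_field av q
  for av :: "'a::field \<Rightarrow> real" and q :: 'a
begin

abbreviation \<sigma> where "\<sigma> \<equiv> sigma_q q"
abbreviation dq where "dq \<equiv> d_q q"

definition \<Delta> :: "(int \<Rightarrow> 'a) \<Rightarrow> int \<Rightarrow> 'a" where
  "\<Delta> f i = q_zint i * f i"

lemma d_q_eq_divT_\<Delta>: "dq f = ls_divT (\<Delta> f)"
  unfolding d_q_def \<Delta>_def sigma_q_def q_zint_def by (simp add: field_simps)

lemma d_q_coeff: "dq f i = q_zint (i + 1) * f (i + 1)"
  unfolding d_q_eq_divT_\<Delta> ls_divT_def \<Delta>_def ..

lemma EK_\<sigma>: "EK f \<Longrightarrow> EK (\<sigma> f)"
  unfolding sigma_q_def by (rule EK_cmult) auto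

lemma gnorm_\<sigma>_le: "EK f \<Longrightarrow> gnorm (\<sigma> f) \<le> gnorm f"
  unfolding sigma_q_def by (rule gnorm_least) (simp add: gnorm_upper)

lemma EK_\<Delta>: "EK f \<Longrightarrow> EK (\<Delta> f)"
  unfolding \<Delta>_def by (intro EK_cmult av_q_zint_le_1)

lemma EK_d_q: "EK f \<Longrightarrow> EK (dq f)"
  unfolding d_q_eq_divT_\<Delta> by (intro EK_divT EK_\<Delta>)

lemma EK_\<sigma>_pow: "EK f \<Longrightarrow> EK ((\<sigma> ^^ k) f)"
  by (induction k) (auto intro: EK_\<sigma>)

lemma EK_d_q_pow: "EK f \<Longrightarrow> EK ((dq ^^ k) f)"
  by (induction k) (auto intro: EK_d_q)

lemma gnorm_\<sigma>_pow_le: "EK f \<Longrightarrow> gnorm ((\<sigma> ^^ k) f) \<le> gnorm f"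
  by (induction k) (auto intro: order_trans[OF gnorm_\<sigma>_le] EK_\<sigma>_pow)

lemma d_q_pow_coeff: "(dq ^^ j) f n = (\<Prod>i=1..j. q_zint (n + int i)) * f (n + int j)"
proof (induction j arbitrary: n)
  case (Suc j)
  have "(\<Prod>i=1..Suc j. q_zint (n + int i)) = q_zint (n + int 1) * (\<Prod>i=Suc 1..Suc j. q_zint (n + int i))"
    by (rule prod.atLeast_Suc_atMost) simp
  also have "(\<Prod>i=Suc 1..Suc j. q_zint (n + int i)) = (\<Prod>i=1..j. q_zint (n + int (Suc i)))"
    by (rule prod.shift_bounds_cl_Suc_ivl)
  finally have "(\<Prod>i=1..Suc j. q_zint (n + int i)) = q_zint (n + 1) * (\<Prod>i=1..j. q_zint (n + 1 + int i))"
    by (simp add: algebra_simps)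
  then show ?case
    using Suc[of "n + 1"] by (simp add: d_q_coeff algebra_simps)
qed simp

lemma gnorm_d_q_pow_le: "EK f \<Longrightarrow> gnorm ((dq ^^ j) f) \<le> av (q_fact q j) * gnorm f"
  unfolding d_q_pow_coeff
  by (intro gnorm_least)
    (auto simp only: av_mult intro!: mult_mono av_prod_q_zint_shift_le gnorm_upper
      less_imp_le[OF av_q_fact_pos] av_nonneg)

lemma \<sigma>_mul:
  assumes a: "EK a" and b: "EK b"
  shows "\<sigma> (mul a b) = mul (\<sigma> a) (\<sigma> b)"
proof
  fix n
  have "q powi n = q powi i * q powi (n - i)" for i
    using q_ne_0 by (simp add: power_int_add[symmetric])
  then have "has_usum (\<lambda>i. \<sigma> a i * \<sigma> b (n - i)) (q powi n * mul a b n)"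
    by (intro has_usum_cong[OF has_usum_cmult[OF mul_has_usum[OF a b]]])
      (simp add: sigma_q_def mult_ac)
  then show "\<sigma> (mul a b) n = mul (\<sigma> a) (\<sigma> b) n"
    using mul_eqI[OF EK_\<sigma>[OF a] EK_\<sigma>[OF b]] unfolding sigma_q_def by simp
qed

text \<open>The \<open>q\<close>-Leibniz rule, coefficientwise from \<open>[n]\<^sub>q = [i]\<^sub>q + q\<^sup>i [n - i]\<^sub>q\<close>.\<close>
lemma \<Delta>_mul:
  assumes a: "EK a" and b: "EK b"
  shows "\<Delta> (mul a b) n = mul (\<sigma> a) (\<Delta> b) n + mul (\<Delta> a) b n"
proof -
  have split: "q_zint n = q_zint i + q powi i * q_zint (n - i)" for i
  proof -
    have "q powi n - 1 = (q powi i - 1) + q powi i * (q powi (n - i) - 1)"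
      using q_ne_0 by (simp add: power_int_add[symmetric] algebra_simps)
    then show ?thesis
      unfolding q_zint_def by (simp only: add_divide_distrib times_divide_eq_right)
  qed
  have "has_usum (\<lambda>i. \<sigma> a i * \<Delta> b (n - i) + \<Delta> a i * b (n - i))
      (mul (\<sigma> a) (\<Delta> b) n + mul (\<Delta> a) b n)"
    by (intro has_usum_add mul_has_usum EK_\<sigma> EK_\<Delta> a b)
  moreover have "\<sigma> a i * \<Delta> b (n - i) + \<Delta> a i * b (n - i) = q_zint n * (a i * b (n - i))" for i
    unfolding split[of i] by (simp add: sigma_q_def \<Delta>_def algebra_simps)
  ultimately have "has_usum (\<lambda>i. q_zint n * (a i * b (n - i))) (mul (\<sigma> a) (\<Delta> b) n + mul (\<Delta> a) b n)"
    by (rule has_usum_cong)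
  moreover have "has_usum (\<lambda>i. q_zint n * (a i * b (n - i))) (\<Delta> (mul a b) n)"
    unfolding \<Delta>_def by (intro has_usum_cmult mul_has_usum a b)
  ultimately show ?thesis
    using has_usum_unique by blast
qed

lemma d_q_mul:
  assumes a: "EK a" and b: "EK b"
  shows "dq (mul a b) n = mul (\<sigma> a) (dq b) n + mul (dq a) b n"
proof -
  have "dq (mul a b) n = ls_divT (mul (\<Delta> b) (\<sigma> a)) n + ls_divT (mul (\<Delta> a) b) n"
    unfolding d_q_eq_divT_\<Delta> ls_divT_def \<Delta>_mul[OF a b]
    using mul_commute[OF EK_\<sigma>[OF a] EK_\<Delta>[OF b]] by simp
  also have "\<dots> = mul (\<sigma> a) (dq b) n + mul (dq a) b n"
    unfolding d_q_eq_divT_\<Delta> mul_divT_left[OF EK_\<Delta>[OF b] EK_\<sigma>[OF a]]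
      mul_divT_left[OF EK_\<Delta>[OF a] b]
    using mul_commute[OF EK_divT[OF EK_\<Delta>[OF b]] EK_\<sigma>[OF a]] by simp
  finally show ?thesis .
qed

lemma d_q_\<sigma>_pow: "dq ((\<sigma> ^^ k) f) = (\<lambda>n. q ^ k * (\<sigma> ^^ k) (dq f) n)"
proof (rule ext)
  have "(\<sigma> ^^ k) f i = q powi (i * int k) * f i" for f i
    by (induction k) (simp_all add: sigma_q_def q_ne_0 power_int_add algebra_simps)
  then show "dq ((\<sigma> ^^ k) f) n = q ^ k * (\<sigma> ^^ k) (dq f) n" for n
    using q_ne_0 by (simp add: d_q_coeff power_int_add algebra_simps)
qed

end

section \<open>The iterates \<open>g[s]\<close>\<close>

primrec q_binom :: "'a::field \<Rightarrow> nat \<Rightarrow> nat \<Rightarrow> 'a" where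
  "q_binom q 0 k = (if k = 0 then 1 else 0)"
| "q_binom q (Suc t) k = q ^ k * q_binom q t k + (if k = 0 then 0 else q_binom q t (k - 1))"

lemma q_binom_eq_0: "t < k \<Longrightarrow> q_binom q t k = 0"
  by (induction t arbitrary: k) auto

lemma (in q_nonarch_field) av_q_binom_le_1: "av (q_binom q t k) \<le> 1"
  by (induction t arbitrary: k) (auto intro!: av_add_le)

locale q_difference_equation = q_laurent_series +
  fixes g :: "int \<Rightarrow> 'a"
  assumes EK_g: "EK g" and gnorm_g_le_1: "gnorm g \<le> 1"
begin

abbreviation gbr where "gbr \<equiv> g_br av q g"

definition D :: "(int \<Rightarrow> 'a) \<Rightarrow> int \<Rightarrow> 'a" where
  "D f = ls_add (dq f) (mul (\<sigma> f) (ls_divT g))"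

lemma gbr_Suc: "gbr (Suc s) = D (gbr s)"
  unfolding D_def by simp

declare g_br.simps(2) [simp del]

lemma gbr_add: "gbr (s + t) = (D ^^ t) (gbr s)"
  by (induction t) (simp_all add: gbr_Suc)

lemma EK_g_div_T: "EK (ls_divT g)"
  using EK_divT[OF EK_g] .

lemma EK_D: "EK f \<Longrightarrow> EK (D f)"
  unfolding D_def ls_add_def by (intro EK_add EK_d_q EK_mul EK_\<sigma> EK_g_div_T)

lemma gnorm_D_le:
  assumes f: "EK f"
  shows "gnorm (D f) \<le> gnorm f"
proof -
  have "gnorm (mul (\<sigma> f) (ls_divT g)) \<le> gnorm (\<sigma> f) * gnorm (ls_divT g)"
    by (rule gnorm_mul[OF EK_\<sigma>[OF f] EK_g_div_T])
  also have "\<dots> \<le> gnorm f"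
    using gnorm_\<sigma>_le[OF f] gnorm_divT[OF EK_g] gnorm_g_le_1 gnorm_nonneg[OF EK_\<sigma>[OF f]]
    by (metis mult_left_le order.trans mult_left_mono)
  finally have "gnorm (mul (\<sigma> f) (ls_divT g)) \<le> gnorm f" .
  moreover have "gnorm (dq f) \<le> gnorm f"
    using gnorm_d_q_pow_le[OF f, of 1] av_q_fact_le_1[of 1] gnorm_nonneg[OF f]
    by (simp add: mult_left_le_one_le order_trans)
  ultimately show ?thesis
    unfolding D_def ls_add_def
    using gnorm_add[OF EK_d_q[OF f] EK_mul[OF EK_\<sigma>[OF f] EK_g_div_T]] by linarith
qed

lemma EK_gbr: "EK (gbr s)"
  by (induction s) (auto simp: gbr_Suc EK_one intro: EK_D)

lemma gnorm_gbr_le_1: "gnorm (gbr s) \<le> 1"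
  by (induction s) (auto simp: gbr_Suc gnorm_one intro: order_trans[OF gnorm_D_le[OF EK_gbr]])

lemma D_mul:
  assumes x: "EK x" and y: "EK y"
  shows "D (mul x y) n = mul (dq x) y n + mul (\<sigma> x) (D y) n"
proof -
  have "mul (\<sigma> (mul x y)) (ls_divT g) n = mul (\<sigma> x) (mul (\<sigma> y) (ls_divT g)) n"
    using \<sigma>_mul[OF x y] mul_assoc[OF EK_\<sigma>[OF x] EK_\<sigma>[OF y] EK_g_div_T] by simp
  then show ?thesis
    unfolding D_def ls_add_def d_q_mul[OF x y]
    using mul_add_right[OF EK_d_q[OF y] EK_mul[OF EK_\<sigma>[OF y] EK_g_div_T] EK_\<sigma>[OF x]]
    by (simp add: algebra_simps)
qed

lemma D_linear:
  assumes "\<And>k. k \<in> S \<Longrightarrow> EK (X k)"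
  shows "D (\<lambda>i. \<Sum>k\<in>S. c k * X k i) n = (\<Sum>k\<in>S. c k * D (X k) n)"
proof -
  have "mul (\<lambda>i. \<Sum>k\<in>S. c k * \<sigma> (X k) i) (ls_divT g) n = (\<Sum>k\<in>S. c k * mul (\<sigma> (X k)) (ls_divT g) n)"
    using assms
    by (simp add: mul_sum_left[OF _ EK_g_div_T] mul_smult_left[OF EK_\<sigma> EK_g_div_T] EK_smult EK_\<sigma>)
  then show ?thesis
    unfolding D_def ls_add_def
    by (simp add: d_q_coeff sigma_q_def sum_distrib_left sum.distrib algebra_simps)
qed

lemma D_mul_\<sigma>_pow_d_q_pow:
  assumes "EK f"
  shows "D (mul ((\<sigma> ^^ k) ((dq ^^ j) f)) (gbr k)) n
    = q ^ k * mul ((\<sigma> ^^ k) ((dq ^^ Suc j) f)) (gbr k) n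
      + mul ((\<sigma> ^^ Suc k) ((dq ^^ j) f)) (gbr (Suc k)) n"
proof -
  have "mul (dq ((\<sigma> ^^ k) ((dq ^^ j) f))) (gbr k) n
      = mul (\<lambda>i. q ^ k * (\<sigma> ^^ k) ((dq ^^ Suc j) f) i) (gbr k) n"
    by (simp add: d_q_\<sigma>_pow)
  also have "\<dots> = q ^ k * mul ((\<sigma> ^^ k) ((dq ^^ Suc j) f)) (gbr k) n"
    by (intro mul_smult_left EK_\<sigma>_pow EK_d_q_pow assms EK_gbr)
  finally show ?thesis
    by (simp add: D_mul EK_\<sigma>_pow EK_d_q_pow assms EK_gbr gbr_Suc)
qed

lemma D_pow_expansion:
  assumes f: "EK f"
  shows "(D ^^ t) f n = (\<Sum>k\<le>t. q_binom q t k * mul ((\<sigma> ^^ k) ((dq ^^ (t - k)) f)) (gbr k) n)"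
proof (induction t arbitrary: n)
  case 0
  then show ?case
    by (simp add: mul_one_right[OF f])
next
  case (Suc t)
  define M where "M k j = mul ((\<sigma> ^^ k) ((dq ^^ j) f)) (gbr k) n" for k j
  have "(D ^^ t) f = (\<lambda>i. \<Sum>k\<le>t. q_binom q t k * mul ((\<sigma> ^^ k) ((dq ^^ (t - k)) f)) (gbr k) i)"
    by (rule ext) (rule Suc.IH)
  then have "(D ^^ Suc t) f n = D (\<lambda>i. \<Sum>k\<le>t. q_binom q t k * mul ((\<sigma> ^^ k) ((dq ^^ (t - k)) f)) (gbr k) i) n"
    by simp
  also have "\<dots> = (\<Sum>k\<le>t. q_binom q t k * D (mul ((\<sigma> ^^ k) ((dq ^^ (t - k)) f)) (gbr k)) n)"
    by (intro D_linear EK_mul EK_\<sigma>_pow EK_d_q_pow f EK_gbr)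
  also have "\<dots> = (\<Sum>k\<le>t. q_binom q t k * (q ^ k * M k (Suc t - k) + M (Suc k) (t - k)))"
    by (intro sum.cong refl) (simp add: D_mul_\<sigma>_pow_d_q_pow[OF f] M_def Suc_diff_le)
  also have "\<dots> = (\<Sum>k\<le>t. q ^ k * q_binom q t k * M k (Suc t - k))
      + (\<Sum>k\<le>t. q_binom q t k * M (Suc k) (t - k))"
    by (simp add: sum.distrib algebra_simps)
  also have "(\<Sum>k\<le>t. q ^ k * q_binom q t k * M k (Suc t - k))
      = (\<Sum>k\<le>Suc t. q ^ k * q_binom q t k * M k (Suc t - k))"
    by (simp add: q_binom_eq_0)
  also have "(\<Sum>k\<le>t. q_binom q t k * M (Suc k) (t - k))
      = (\<Sum>k\<le>Suc t. (if k = 0 then 0 else q_binom q t (k - 1)) * M k (Suc t - k))"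
    by (subst sum.atMost_Suc_shift) simp
  also have "(\<Sum>k\<le>Suc t. q ^ k * q_binom q t k * M k (Suc t - k))
      + (\<Sum>k\<le>Suc t. (if k = 0 then 0 else q_binom q t (k - 1)) * M k (Suc t - k))
      = (\<Sum>k\<le>Suc t. q_binom q (Suc t) k * M k (Suc t - k))"
    by (simp add: sum.distrib[symmetric] algebra_simps)
  finally show ?case
    unfolding M_def .
qed

lemma gnorm_D_pow_le:
  assumes f: "EK f"
  shows "gnorm ((D ^^ t) f) \<le> (MAX k\<in>{..t}. av (q_fact q (t - k)) * gnorm f * gnorm (gbr k))"
    (is "_ \<le> Max (?term ` _)")
proof (rule gnorm_least)
  fix n
  have term_le: "av (q_binom q t k * mul ((\<sigma> ^^ k) ((dq ^^ (t - k)) f)) (gbr k) n) \<le> ?term k" for k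
  proof -
    have "av (q_binom q t k * mul ((\<sigma> ^^ k) ((dq ^^ (t - k)) f)) (gbr k) n)
        \<le> av (mul ((\<sigma> ^^ k) ((dq ^^ (t - k)) f)) (gbr k) n)"
      using av_q_binom_le_1[of t k] by (simp add: mult_left_le_one_le)
    also have "\<dots> \<le> gnorm (mul ((\<sigma> ^^ k) ((dq ^^ (t - k)) f)) (gbr k))"
      by (intro gnorm_upper EK_mul EK_\<sigma>_pow EK_d_q_pow f EK_gbr)
    also have "\<dots> \<le> gnorm ((\<sigma> ^^ k) ((dq ^^ (t - k)) f)) * gnorm (gbr k)"
      by (intro gnorm_mul EK_\<sigma>_pow EK_d_q_pow f EK_gbr)
    also have "\<dots> \<le> ?term k"
      using order_trans[OF gnorm_\<sigma>_pow_le[OF EK_d_q_pow[OF f]] gnorm_d_q_pow_le[OF f]]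
      by (intro mult_right_mono gnorm_nonneg EK_gbr)
    finally show ?thesis .
  qed
  have "?term 0 \<le> Max (?term ` {..t})"
    by (intro Max_ge finite_imageI imageI) auto
  moreover have "0 \<le> ?term 0"
    using av_q_fact_pos gnorm_nonneg[OF f] by (simp add: gnorm_one)
  ultimately have "0 \<le> Max (?term ` {..t})"
    by linarith
  moreover have "?term k \<le> Max (?term ` {..t})" if "k \<in> {..t}" for k
    using that by (intro Max_ge finite_imageI imageI) auto
  ultimately show "av ((D ^^ t) f n) \<le> Max (?term ` {..t})"
    unfolding D_pow_expansion[OF f] using term_le by (intro av_sum_le) (blast intro: order_trans)
qed

lemma gnorm_gbr_add_le:
  "gnorm (gbr (s + t)) \<le> (MAX k\<in>{..t}. av (q_fact q (t - k)) * gnorm (gbr s) * gnorm (gbr k))"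
  unfolding gbr_add by (rule gnorm_D_pow_le[OF EK_gbr])

end

section \<open>Residue characteristic \<open>p\<close>\<close>

locale residue_char = nonarch_field av for av :: "'a::field_char_0 \<Rightarrow> real" +
  fixes p :: nat
  assumes prime_p: "prime p" and av_p_lt_1: "av (of_nat p) < 1"
begin

lemma p_ge_2: "p \<ge> 2"
  using prime_p prime_ge_2_nat by blast

lemma av_p_pos: "0 < av (of_nat p)"
  using p_ge_2 by (intro av_pos) auto

text \<open>A Bezout relation \<open>m x = p y + 1\<close> shows that \<open>|m| < 1\<close> would force \<open>|1| < 1\<close>.\<close>
lemma av_of_nat_eq_1:
  assumes "\<not> p dvd m"
  shows "av (of_nat m) = 1"
proof -
  have "m \<noteq> 0"
    using assms by (metis dvd_0_right)
  have "gcd m p = 1"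
    using prime_imp_coprime[OF prime_p assms] by (simp add: coprime_iff_gcd_eq_1 gcd.commute)
  then obtain x y where "m * x = p * y + 1"
    using bezout_nat[OF \<open>m \<noteq> 0\<close>, of p] by auto
  then have "(of_nat (m * x) :: 'a) = of_nat (p * y + 1)"
    by simp
  then have e: "of_nat m * of_nat x - of_nat p * of_nat y = (1 :: 'a)"
    by simp
  have "1 \<le> max (av (of_nat m * of_nat x :: 'a)) (av (of_nat p * of_nat y :: 'a))"
    using av_diff_le_max[of "of_nat m * of_nat x :: 'a" "of_nat p * of_nat y", unfolded e] by simp
  moreover have "av (of_nat m * of_nat x :: 'a) \<le> av (of_nat m :: 'a)"
    using av_of_nat_le_1[of x] by (simp add: mult_right_le_one_le)
  moreover have "av (of_nat p :: 'a) * av (of_nat y :: 'a) \<le> av (of_nat p :: 'a)"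
    by (rule mult_right_le_one_le) (simp_all add: av_of_nat_le_1)
  then have "av (of_nat p * of_nat y :: 'a) < 1"
    using av_p_lt_1 by simp
  ultimately show ?thesis
    using av_of_nat_le_1[of m] by linarith
qed

lemma av_fact: "av (fact n :: 'a) = (\<Prod>j=1..n. av (of_nat j :: 'a))"
  unfolding fact_prod by (simp add: av_prod)

text \<open>Legendre's recursion: only the multiples \<open>p i\<close>, \<open>1 \<le> i \<le> n div p\<close>, contribute.\<close>
lemma av_fact_eq: "av (fact n :: 'a) = av (of_nat p :: 'a) ^ (n div p) * av (fact (n div p) :: 'a)"
proof -
  let ?f = "\<lambda>j. av (of_nat j :: 'a)"
  have multiples: "{1..n} \<inter> {j. p dvd j} = (\<lambda>i. p * i) ` {1..n div p}"
  proof (intro equalityI subsetI)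
    fix j assume "j \<in> {1..n} \<inter> {j. p dvd j}"
    then obtain i where "j = p * i" "1 \<le> p * i" "p * i \<le> n"
      by (auto elim: dvdE)
    moreover from this have "i \<in> {1..n div p}"
      using p_ge_2 by (auto simp: less_eq_div_iff_mult_less_eq mult.commute intro: Suc_leI)
    ultimately show "j \<in> (\<lambda>i. p * i) ` {1..n div p}"
      by blast
  next
    fix j assume "j \<in> (\<lambda>i. p * i) ` {1..n div p}"
    then obtain i where "j = p * i" "1 \<le> i" "i * p \<le> n"
      using p_ge_2 by (auto simp: less_eq_div_iff_mult_less_eq)
    then show "j \<in> {1..n} \<inter> {j. p dvd j}"
      using p_ge_2 by (auto simp: mult.commute intro: order_trans[OF _ mult_le_mono1[of 1 i p]])
  qed
  have "av (fact n :: 'a) = prod ?f ({1..n} \<inter> {j. p dvd j}) * prod ?f ({1..n} - {j. p dvd j})"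
    unfolding av_fact by (rule prod.Int_Diff) simp
  also have "prod ?f ({1..n} - {j. p dvd j}) = 1"
    by (rule prod.neutral) (simp add: av_of_nat_eq_1)
  also have "prod ?f ({1..n} \<inter> {j. p dvd j}) = (\<Prod>i=1..n div p. av (of_nat p :: 'a) * ?f i)"
    unfolding multiples using p_ge_2 by (subst prod.reindex) (auto simp: inj_on_def)
  finally show ?thesis
    by (simp add: prod.distrib av_fact)
qed

lemma av_fact_ge: "av (of_nat p :: 'a) ^ n \<le> av (fact n :: 'a)"
proof (induction n rule: less_induct)
  case (less n)
  show ?case
  proof (cases "n = 0")
    case False
    then have "n div p < n"
      using p_ge_2 by simp
    have "n div p + n div p \<le> n"
      using p_ge_2 div_times_less_eq_dividend[of n p] mult_le_mono2[of 2 p "n div p"] by linarith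
    then have "av (of_nat p :: 'a) ^ n \<le> av (of_nat p :: 'a) ^ (n div p + n div p)"
      using av_p_lt_1 by (intro power_decreasing) auto
    also have "\<dots> = av (of_nat p :: 'a) ^ (n div p) * av (of_nat p :: 'a) ^ (n div p)"
      by (rule power_add)
    also have "\<dots> \<le> av (of_nat p :: 'a) ^ (n div p) * av (fact (n div p) :: 'a)"
      by (intro mult_left_mono less.IH \<open>n div p < n\<close>) simp
    finally show ?thesis
      using av_fact_eq[of n] by linarith
  qed simp
qed

text \<open>Binomial expansion of \<open>(1 + y)\<^sup>p\<close>: the middle coefficients are divisible by \<open>p\<close>.\<close>
lemma av_power_p_binomial_le:
  assumes "av (x - 1) < 1"
  shows "av (x ^ p - 1 - of_nat p * (x - 1))
    \<le> av (x - 1) * max (av (of_nat p :: 'a) * av (x - 1)) (av (x - 1) ^ (p - 1))"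
proof -
  define y where "y = x - 1"
  have "x ^ p = (\<Sum>k\<le>p. of_nat (p choose k) * y ^ k)"
    using binomial_ring[of y 1 p] unfolding y_def by simp
  also have "{..p} = insert 0 (insert 1 {2..p})"
    using p_ge_2 by auto
  finally have expand: "x ^ p - 1 - of_nat p * y = (\<Sum>k\<in>{2..p}. of_nat (p choose k) * y ^ k)"
    by simp
  have "av (of_nat (p choose k) * y ^ k) \<le> av y * max (av (of_nat p :: 'a) * av y) (av y ^ (p - 1))"
    if k: "k \<in> {2..p}" for k
  proof (cases "k = p")
    case True
    have "av y ^ p = av y * av y ^ (p - 1)"
      using p_ge_2 by (cases p) auto
    then show ?thesis
      using True by (simp add: mult_left_mono)
  next
    case False
    then have "p dvd (p choose k)"
      using k prime_p by (intro dvd_choose_prime) auto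
    then obtain c where c: "p choose k = p * c" ..
    have "av y ^ k \<le> av y ^ 2"
      using k assms unfolding y_def by (intro power_decreasing) auto
    then have "av (of_nat (p choose k) * y ^ k) \<le> av (of_nat p :: 'a) * (1 * (av y * av y))"
      unfolding c using av_of_nat_le_1[of c]
      by (simp only: of_nat_mult av_mult av_power power2_eq_square mult.assoc)
        (intro mult_left_mono mult_mono; simp)
    also have "\<dots> \<le> av y * max (av (of_nat p :: 'a) * av y) (av y ^ (p - 1))"
      by (simp add: mult_left_mono mult_ac)
    finally show ?thesis .
  qed
  then show ?thesis
    unfolding expand y_def[symmetric] by (intro av_sum_le) (auto simp: le_max_iff_disj)
qed

lemma av_power_p_sub_1_eq:
  assumes "av (x - 1) < av (of_nat p)"
  shows "av (x ^ p - 1) = av (of_nat p) * av (x - 1)"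
proof (cases "x = 1")
  case False
  have lt1: "av (x - 1) < 1"
    using assms av_p_lt_1 by linarith
  have "av (x - 1) ^ (p - 1) \<le> av (x - 1)"
    using lt1 p_ge_2 power_decreasing[of 1 "p - 1" "av (x - 1)"] by simp
  then have "max (av (of_nat p :: 'a) * av (x - 1)) (av (x - 1) ^ (p - 1)) < av (of_nat p)"
    using assms lt1 av_p_pos by (simp add: mult_strict_left_mono[of _ 1, simplified])
  then have "av (x ^ p - 1 - of_nat p * (x - 1)) < av (of_nat p * (x - 1))"
    using av_power_p_binomial_le[OF lt1] av_pos[of "x - 1"] False
    by (auto simp: mult.commute intro: order.strict_trans1)
  then have "av ((x ^ p - 1 - of_nat p * (x - 1)) + of_nat p * (x - 1)) = av (of_nat p * (x - 1))"
    by (rule av_add_eq_right)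
  then show ?thesis
    by simp
qed simp

lemma av_power_p_sub_1_le:
  assumes "av (x - 1) \<le> r" "r < 1"
  shows "av (x ^ p - 1) \<le> av (x - 1) * max (av (of_nat p :: 'a)) (r ^ (p - 1))"
proof -
  have "av (of_nat p :: 'a) * av (x - 1) \<le> av (of_nat p)"
    using assms by (intro mult_right_le_one_le) auto
  moreover have "av (x - 1) ^ (p - 1) \<le> r ^ (p - 1)"
    using assms(1) by (intro power_mono) auto
  ultimately have "max (av (of_nat p :: 'a) * av (x - 1)) (av (x - 1) ^ (p - 1)) \<le> max (av (of_nat p)) (r ^ (p - 1))"
    by (rule max.mono)
  then have "av (x ^ p - 1 - of_nat p * (x - 1)) \<le> av (x - 1) * max (av (of_nat p :: 'a)) (r ^ (p - 1))"
    using av_power_p_binomial_le[of x] assms mult_left_mono[of _ _ "av (x - 1)"]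
    by (meson av_nonneg le_less_trans order_trans)
  moreover have "av (of_nat p * (x - 1)) \<le> av (x - 1) * max (av (of_nat p :: 'a)) (r ^ (p - 1))"
    using mult_left_mono[OF max.cobounded1 av_nonneg[of "x - 1"]] by (metis av_mult mult.commute)
  ultimately have "av ((x ^ p - 1 - of_nat p * (x - 1)) + of_nat p * (x - 1))
      \<le> av (x - 1) * max (av (of_nat p :: 'a)) (r ^ (p - 1))"
    by (rule av_add_le)
  then show ?thesis
    by simp
qed

lemma av_power_sub_1_coprime:
  assumes "av (x - 1) < 1" "\<not> p dvd m"
  shows "av (x ^ m - 1) = av (x - 1)"
proof -
  have av_x: "av x = 1"
    using assms(1) by (rule av_eq_1_of_close_to_1)
  have "av (\<Sum>i<m. x ^ i - 1) < av (of_nat m :: 'a)"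
    using av_sum_le[of "{..<m}" "\<lambda>i. x ^ i - 1" "av (x - 1)"] av_power_sub_1_le[OF av_x] assms
      av_of_nat_eq_1[OF assms(2)] by simp
  then have "av ((\<Sum>i<m. x ^ i - 1) + of_nat m) = 1"
    using av_of_nat_eq_1[OF assms(2)] by (simp add: av_add_eq_right)
  then have "av (\<Sum>i<m. x ^ i) = 1"
    by (simp add: sum_subtractf)
  then show ?thesis
    by (simp add: power_diff_1_eq)
qed

text \<open>Near \<open>1\<close>, \<open>x \<mapsto> x\<^sup>j\<close> scales the distance to \<open>1\<close> exactly by \<open>|j|\<close>: coprime exponents
  do not change it and each factor \<open>p\<close> multiplies it by \<open>|p|\<close>.\<close>
lemma av_power_sub_1_eq:
  assumes "av (x - 1) < av (of_nat p)" "j > 0"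
  shows "av (x ^ j - 1) = av (of_nat j) * av (x - 1)"
  using assms(2)
proof (induction j rule: less_induct)
  case (less j)
  show ?case
  proof (cases "p dvd j")
    case False
    then show ?thesis
      using av_power_sub_1_coprime[OF _ False] av_of_nat_eq_1[OF False] assms(1) av_p_lt_1 by simp
  next
    case True
    then obtain i where j: "j = p * i" ..
    then have "0 < i" "i < j"
      using less.prems p_ge_2 by auto
    then have IH: "av (x ^ i - 1) = av (of_nat i) * av (x - 1)"
      by (intro less.IH)
    moreover have "av (of_nat i :: 'a) * av (x - 1) \<le> av (x - 1)"
      using av_of_nat_le_1[of i] by (simp add: mult_left_le_one_le)
    ultimately have "av (x ^ i - 1) < av (of_nat p)"
      using assms(1) by linarith
    then have "av ((x ^ i) ^ p - 1) = av (of_nat p) * av (x ^ i - 1)"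
      by (rule av_power_p_sub_1_eq)
    then show ?thesis
      unfolding j IH by (simp add: power_mult mult.commute)
  qed
qed

end

section \<open>Bounds on \<open>|[n]\<^sub>q!|\<close>\<close>

locale q_residue_char = q_nonarch_field av q + residue_char av p
  for av :: "'a::field_char_0 \<Rightarrow> real" and q :: 'a and p :: nat
begin

text \<open>Each \<open>p\<close>-th power contracts the distance to \<open>1\<close> by the factor
  \<open>max |p| |q - 1|\<^sup>p\<^sup>-\<^sup>1 < 1\<close>.\<close>
lemma av_q_power_p_power_sub_1_lt:
  obtains K where "av (q ^ p ^ K - 1) < av (of_nat p)"
proof -
  define \<theta> where "\<theta> = max (av (of_nat p :: 'a)) (av (q - 1) ^ (p - 1))"
  have "av (q - 1) ^ (p - 1) < 1"
    using q_close_to_1 p_ge_2 by (simp add: power_less_one_iff)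
  then have \<theta>: "0 < \<theta>" "\<theta> < 1"
    using av_p_pos av_p_lt_1 unfolding \<theta>_def by auto
  have contract: "av (q ^ p ^ k - 1) \<le> av (q - 1) * \<theta> ^ k" for k
  proof (induction k)
    case (Suc k)
    have "av (q ^ p ^ k - 1) \<le> av (q - 1)"
      by (simp add: av_power_sub_1_le)
    then have "av ((q ^ p ^ k) ^ p - 1) \<le> av (q ^ p ^ k - 1) * \<theta>"
      unfolding \<theta>_def using q_close_to_1 by (rule av_power_p_sub_1_le)
    also have "\<dots> \<le> av (q - 1) * \<theta> ^ k * \<theta>"
      using Suc \<theta> by (intro mult_right_mono) auto
    also have "(q ^ p ^ k) ^ p = q ^ p ^ Suc k"
      by (simp only: power_Suc2 power_mult)
    finally show ?case
      by (simp add: mult_ac)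
  qed simp
  obtain K where "\<theta> ^ K < av (of_nat p)"
    using real_arch_pow_inv[OF av_p_pos \<theta>(2)] by blast
  moreover have "av (q - 1) * \<theta> ^ K \<le> \<theta> ^ K"
    using q_close_to_1 \<theta> by (intro mult_left_le_one_le) auto
  ultimately show thesis
    using contract[of K] by (intro that[of K]) linarith
qed

text \<open>With \<open>Q = q^(p^K)\<close> so close to \<open>1\<close> that \<open>av_power_sub_1_eq\<close> applies,
  \<open>|j| |Q - 1| = |Q\<^sup>j - 1| \<le> |q\<^sup>j - 1|\<close>.\<close>
lemma av_q_int_ge:
  obtains c where "0 < c" "\<And>j. 0 < j \<Longrightarrow> c * av (of_nat j :: 'a) \<le> av (q_int q j)"
proof -
  obtain K where K: "av (q ^ p ^ K - 1) < av (of_nat p)"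
    by (rule av_q_power_p_power_sub_1_lt)
  define Q where "Q = q ^ p ^ K"
  have "0 < av (Q - 1)"
    unfolding Q_def using q_not_root_of_unity p_ge_2 by (intro av_pos) simp
  moreover have "av (Q - 1) / av (q - 1) * av (of_nat j :: 'a) \<le> av (q_int q j)" if "0 < j" for j
  proof -
    have "av (of_nat j :: 'a) * av (Q - 1) = av ((q ^ j) ^ p ^ K - 1)"
      using av_power_sub_1_eq[OF K[folded Q_def] that]
      by (simp add: Q_def power_mult[symmetric] mult.commute)
    also have "\<dots> \<le> av (q ^ j - 1)"
      by (simp add: av_power_sub_1_le)
    finally have "av (of_nat j :: 'a) * av (Q - 1) / av (q - 1) \<le> av (q ^ j - 1) / av (q - 1)"
      using av_q_minus_1_pos by (simp add: divide_right_mono)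
    then show ?thesis
      unfolding q_int_def by (simp add: mult.commute)
  qed
  ultimately show thesis
    using av_q_minus_1_pos by (intro that[of "av (Q - 1) / av (q - 1)"]) auto
qed

lemma av_q_fact_ge:
  obtains c where "0 < c" "\<And>n. c ^ n \<le> av (q_fact q n)"
proof -
  obtain c where c: "0 < c" "\<And>j. 0 < j \<Longrightarrow> c * av (of_nat j :: 'a) \<le> av (q_int q j)"
    using av_q_int_ge by metis
  have "(c * av (of_nat p :: 'a)) ^ n \<le> av (q_fact q n)" for n
  proof -
    have "(c * av (of_nat p :: 'a)) ^ n \<le> c ^ n * av (fact n :: 'a)"
      using av_fact_ge c(1) by (simp add: power_mult_distrib mult_left_mono)
    also have "\<dots> = (\<Prod>j=1..n. c * av (of_nat j :: 'a))"
      by (simp add: av_fact prod.distrib)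
    also have "\<dots> \<le> (\<Prod>j=1..n. av (q_int q j))"
      using c by (intro prod_mono) auto
    finally show ?thesis
      by (simp add: q_fact_def av_prod)
  qed
  then show thesis
    using c(1) av_p_pos by (intro that[of "c * av (of_nat p)"]) simp_all
qed

lemma av_q_fact_p_lt_1: "av (q_fact q p) < 1"
proof -
  have "av (\<Sum>k<p. q ^ k - 1) < 1"
    using av_sum_le[of "{..<p}" "\<lambda>k. q ^ k - 1" "av (q - 1)"] av_power_sub_1_le q_close_to_1 by simp
  then have "av (of_nat p + (\<Sum>k<p. q ^ k - 1)) < 1"
    using av_p_lt_1 av_add_le_max[of "of_nat p" "\<Sum>k<p. q ^ k - 1"] by linarith
  then have "av (q_int q p) < 1"
    by (simp add: q_int_eq_sum sum_subtractf)
  moreover have "q_fact q p = q_fact q (p - 1) * q_int q p"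
    using p_ge_2 q_fact_Suc[of "p - 1"] by simp
  ultimately have "av (q_fact q p) \<le> av (q_int q p)"
    using av_q_fact_le_1[of "p - 1"] by (simp add: mult_left_le_one_le)
  then show ?thesis
    using \<open>av (q_int q p) < 1\<close> by linarith
qed

end

section \<open>Fekete's lemma and \<open>\<omega>\<^sub>q\<close>\<close>

lemma subadditive_iterate:
  fixes x :: "nat \<Rightarrow> real"
  assumes sub: "\<And>m n. x (m + n) \<le> x m + x n"
  shows "x (a * m + r) \<le> real a * x m + x r"
proof (induction a)
  case (Suc a)
  have "x (Suc a * m + r) \<le> x m + x (a * m + r)"
    using sub[of m "a * m + r"] by (simp add: add.assoc)
  with Suc show ?case
    by (simp add: algebra_simps)
qed simp

lemma subadditive_nonpos_quotient_le:
  fixes x :: "nat \<Rightarrow> real"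
  assumes sub: "\<And>m n. x (m + n) \<le> x m + x n"
    and nonpos: "\<And>n. x n \<le> 0" and lower: "\<And>n. - B * real n \<le> x n"
    and "0 < m" "m \<le> n"
  shows "x n / real n \<le> x m / real m + real m * B / real n"
proof -
  define y where "y = x m / real m"
  have "n = n div m * m + n mod m"
    by simp
  then have "x n \<le> real (n div m) * x m + x (n mod m)"
    using subadditive_iterate[OF sub] by metis
  also have "\<dots> \<le> real (n div m * m) * y"
    using nonpos[of "n mod m"] \<open>0 < m\<close> by (simp add: y_def)
  also have "\<dots> \<le> (real n - real m) * y"
  proof (rule mult_right_mono_neg)
    have "n < n div m * m + m"
      using \<open>0 < m\<close> mod_less_divisor[of m n] div_mult_mod_eq[of n m] by linarith
    then show "real n - real m \<le> real (n div m * m)"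
      by linarith
    show "y \<le> 0"
      unfolding y_def using nonpos[of m] by (simp add: divide_nonpos_nonneg)
  qed
  finally have "x n / real n \<le> (real n - real m) * y / real n"
    by (rule divide_right_mono) simp
  also have "\<dots> = y - real m * y / real n"
    using assms(4,5) by (simp add: field_simps)
  also have "\<dots> \<le> y + real m * B / real n"
  proof -
    have "- B \<le> y"
      unfolding y_def using lower[of m] \<open>0 < m\<close> by (simp add: le_divide_eq)
    then have "real m * (- y) / real n \<le> real m * B / real n"
      by (intro divide_right_mono mult_left_mono) auto
    then show ?thesis
      by simp
  qed
  finally show ?thesis
    unfolding y_def .
qed

lemma fekete_subadditive:
  fixes x :: "nat \<Rightarrow> real"
  assumes sub: "\<And>m n. x (m + n) \<le> x m + x n"
    and nonpos: "\<And>n. x n \<le> 0" and lower: "\<And>n. - B * real n \<le> x n"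
  shows "(\<lambda>n. x n / real n) \<longlonglongrightarrow> (INF n\<in>{1..}. x n / real n)"
proof (rule LIMSEQ_I)
  let ?L = "INF n\<in>{1..}. x n / real n"
  fix e :: real assume "e > 0"
  have bdd: "bdd_below ((\<lambda>n. x n / real n) ` {1..})"
    using lower by (intro bdd_belowI2[of _ "- B"]) (simp add: le_divide_eq)
  then obtain m where m: "m \<ge> 1" "x m / real m < ?L + e / 2"
    using \<open>e > 0\<close> cINF_less_iff[of "{1..}" "\<lambda>n. x n / real n" "?L + e / 2"] by force
  have B: "0 \<le> B"
    using lower[of 1] nonpos[of 1] by simp
  obtain N where N: "real m * B * 2 / e < real N"
    using reals_Archimedean2 by blast
  have "\<bar>x n / real n - ?L\<bar> < e" if "n \<ge> max N m" for n
  proof -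
    have "0 < n"
      using that m(1) by linarith
    have "real m * B * 2 / e < real n"
      using N that of_nat_mono[of N n] by simp
    then have "real m * B * 2 < real n * e"
      using \<open>e > 0\<close> by (simp add: divide_less_eq mult.commute)
    then have "real m * B / real n < e / 2"
      using \<open>0 < n\<close> by (simp add: divide_less_eq mult.commute)
    moreover have "x n / real n \<le> x m / real m + real m * B / real n"
      by (rule subadditive_nonpos_quotient_le[OF sub nonpos lower]) (use m that in auto)
    ultimately have "x n / real n < ?L + e"
      using m(2) by linarith
    moreover have "?L \<le> x n / real n"
      using bdd \<open>0 < n\<close> by (intro cINF_lower) auto
    ultimately show ?thesis
      by linarith
  qed
  then show "\<exists>no. \<forall>n\<ge>no. norm (x n / real n - ?L) < e"
    by (metis real_norm_def)
qed

context q_residue_char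
begin

lemma ln_av_q_fact_quotient_limit:
  "(\<lambda>n. ln (av (q_fact q n)) / real n) \<longlonglongrightarrow> (INF n\<in>{1..}. ln (av (q_fact q n)) / real n)"
proof -
  obtain c where c: "0 < c" "\<And>n. c ^ n \<le> av (q_fact q n)"
    using av_q_fact_ge by metis
  have "- (- ln c) * real n \<le> ln (av (q_fact q n))" for n
    using ln_mono[OF c(2) zero_less_power[OF c(1)]] c(1) by (simp add: ln_realpow mult.commute)
  moreover have "ln (av (q_fact q (m + n))) \<le> ln (av (q_fact q m)) + ln (av (q_fact q n))" for m n
  proof -
    have "ln (av (q_fact q (m + n))) \<le> ln (av (q_fact q m) * av (q_fact q n))"
      using av_q_fact_add_le av_q_fact_pos by (rule ln_mono)
    then show ?thesis
      by (simp add: ln_mult q_fact_ne_0)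
  qed
  moreover have "ln (av (q_fact q n)) \<le> 0" for n
    using av_q_fact_le_1 av_q_fact_pos by simp
  ultimately show ?thesis
    by (intro fekete_subadditive)
qed

lemma omega_q_eq: "omega_q av q = exp (INF n\<in>{1..}. ln (av (q_fact q n)) / real n)"
  and omega_q_limit: "(\<lambda>n. av (q_fact q n) powr (1 / real n)) \<longlonglongrightarrow> omega_q av q"
proof -
  have lim: "(\<lambda>n. av (q_fact q n) powr (1 / real n)) \<longlonglongrightarrow> exp (INF n\<in>{1..}. ln (av (q_fact q n)) / real n)"
    using tendsto_exp[OF ln_av_q_fact_quotient_limit] by (simp add: powr_def q_fact_ne_0)
  then show eq: "omega_q av q = exp (INF n\<in>{1..}. ln (av (q_fact q n)) / real n)"
    unfolding omega_q_def by (rule limI)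
  show "(\<lambda>n. av (q_fact q n) powr (1 / real n)) \<longlonglongrightarrow> omega_q av q"
    using lim unfolding eq .
qed

lemma omega_q_pos: "0 < omega_q av q"
  unfolding omega_q_eq by simp

lemma omega_q_lt_1: "omega_q av q < 1"
proof -
  obtain c where c: "0 < c" "\<And>n. c ^ n \<le> av (q_fact q n)"
    using av_q_fact_ge by metis
  have "ln c \<le> ln (av (q_fact q n)) / real n" if "n \<ge> 1" for n
    using ln_mono[OF c(2) zero_less_power[OF c(1)]] c(1) that
    by (simp add: ln_realpow le_divide_eq mult.commute)
  then have "(INF n\<in>{1..}. ln (av (q_fact q n)) / real n) \<le> ln (av (q_fact q p)) / real p"
    using p_ge_2 by (intro cINF_lower bdd_belowI2) auto
  also have "\<dots> < 0"
    using av_q_fact_p_lt_1 av_q_fact_pos[of p] p_ge_2 by (simp add: divide_neg_pos)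
  finally show ?thesis
    unfolding omega_q_eq by simp
qed

end

section \<open>Geometric decay of the \<open>g[s]\<close>\<close>

lemma powr_inverse_power:
  fixes x :: real
  assumes "0 \<le> x" "0 < n"
  shows "(x powr (1 / real n)) ^ n = x"
proof (cases "x = 0")
  case False
  then show ?thesis
    using assms real_root_pow_pos[of n x] root_powr_inverse[of n x] by simp
qed (use assms in simp)

lemma recursive_bound_geometric:
  fixes a b :: "nat \<Rightarrow> real"
  assumes "0 < s" "0 < \<rho>" "\<rho> \<le> 1"
    and b_nonneg: "\<And>n. 0 \<le> b n" and b_le_1: "\<And>n. b n \<le> 1"
    and rate: "\<And>j. a j * b s \<le> \<rho> ^ (s + j)"
    and rec: "\<And>t. b (s + t) \<le> (MAX k\<in>{..t}. a (t - k) * b s * b k)"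
  shows "b n \<le> \<rho> ^ n / \<rho> ^ s"
proof (induction n rule: less_induct)
  case (less n)
  show ?case
  proof (cases "n < s")
    case True
    then have "\<rho> ^ s \<le> \<rho> ^ n"
      using assms(2,3) by (intro power_decreasing) auto
    moreover have "b n * \<rho> ^ s \<le> \<rho> ^ s"
      using b_nonneg b_le_1 assms(2) by (simp add: mult_left_le_one_le)
    ultimately show ?thesis
      unfolding pos_le_divide_eq[OF zero_less_power[OF assms(2)]] by linarith
  next
    case False
    then obtain t where n: "n = s + t"
      using le_Suc_ex by (metis not_less)
    have "a (t - k) * b s * b k \<le> \<rho> ^ n / \<rho> ^ s" if "k \<le> t" for k
    proof -
      have "b k \<le> \<rho> ^ k / \<rho> ^ s"
        using less.IH[of k] that n \<open>0 < s\<close> by auto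
      then have "a (t - k) * b s * b k \<le> \<rho> ^ (s + (t - k)) * (\<rho> ^ k / \<rho> ^ s)"
        using rate[of "t - k"] b_nonneg assms(2) by (intro mult_mono) auto
      also have "\<dots> = \<rho> ^ n / \<rho> ^ s"
        using that n by (simp flip: power_add)
      finally show ?thesis .
    qed
    then have "(MAX k\<in>{..t}. a (t - k) * b s * b k) \<le> \<rho> ^ n / \<rho> ^ s"
      by (subst Max_le_iff) auto
    then show ?thesis
      using rec[of t] unfolding n by linarith
  qed
qed

lemma exists_geometric_rate:
  fixes a :: "nat \<Rightarrow> real"
  assumes "0 \<le> c" "c < 1" "0 < \<theta>" "\<theta> < 1"
    and a_le_1: "\<And>j. a j \<le> 1" and a_eventually: "\<And>j. J \<le> j \<Longrightarrow> a j \<le> \<theta> ^ j"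
  obtains \<rho> where "0 < \<rho>" "\<rho> < 1" "\<And>j. a j * c \<le> \<rho> ^ (s + j)"
proof -
  define N where "N = s + J + 1"
  define \<rho> where "\<rho> = max \<theta> (c powr (1 / real N))"
  have "c powr (1 / real N) < 1 powr (1 / real N)"
    using assms(1,2) N_def by (intro powr_less_mono2) auto
  then have "c powr (1 / real N) < 1"
    by simp
  then have \<rho>: "0 < \<rho>" "\<rho> < 1"
    using assms(3,4) unfolding \<rho>_def by auto
  have c_le: "c \<le> \<rho> ^ N"
  proof (cases "c = 0")
    case False
    have "c = (c powr (1 / real N)) ^ N"
      using powr_inverse_power[OF assms(1), of N] by (simp add: N_def del: power_Suc)
    also have "\<dots> \<le> \<rho> ^ N"
      unfolding \<rho>_def by (intro power_mono) auto
    finally show ?thesis .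
  qed (use \<rho> in simp)
  have "a j * c \<le> \<rho> ^ (s + j)" for j
  proof (cases "J \<le> j")
    case True
    have "a j \<le> \<rho> ^ j"
      using a_eventually[OF True] power_mono[of \<theta> \<rho> j] assms(3) unfolding \<rho>_def by auto
    moreover have "c \<le> \<rho> ^ s"
      using c_le power_decreasing[of s N \<rho>] \<rho> unfolding N_def by auto
    ultimately have "a j * c \<le> \<rho> ^ j * \<rho> ^ s"
      using assms(1) \<rho> by (intro mult_mono) auto
    then show ?thesis
      by (simp add: power_add mult.commute)
  next
    case False
    have "a j * c \<le> c"
      using mult_right_mono[OF a_le_1[of j] assms(1)] by simp
    also have "\<dots> \<le> \<rho> ^ (s + j)"
      using c_le power_decreasing[of "s + j" N \<rho>] \<rho> False unfolding N_def by auto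
    finally show ?thesis .
  qed
  then show thesis
    using \<rho> that by blast
qed

lemma geometric_decay:
  fixes a b :: "nat \<Rightarrow> real"
  assumes "0 < s" "b s < 1" "0 < \<theta>" "\<theta> < 1"
    and "\<And>n. 0 \<le> b n" "\<And>n. b n \<le> 1" "\<And>j. a j \<le> 1" "\<And>j. J \<le> j \<Longrightarrow> a j \<le> \<theta> ^ j"
    and "\<And>t. b (s + t) \<le> (MAX k\<in>{..t}. a (t - k) * b s * b k)"
  obtains \<rho> C where "0 < \<rho>" "\<rho> < 1" "0 < C" "\<And>n. b n \<le> C * \<rho> ^ n"
proof -
  obtain \<rho> where \<rho>: "0 < \<rho>" "\<rho> < 1" "\<And>j. a j * b s \<le> \<rho> ^ (s + j)"
    using exists_geometric_rate[of "b s" \<theta> a J s] assms by blast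
  have "b n \<le> 1 / \<rho> ^ s * \<rho> ^ n" for n
    using recursive_bound_geometric[of s \<rho> b a n] \<rho> assms by simp
  then show thesis
    using \<rho> by (intro that[of \<rho> "1 / \<rho> ^ s"]) auto
qed

lemma (in q_residue_char) av_q_fact_eventually_le_power:
  assumes "omega_q av q < \<theta>"
  obtains J where "\<And>j. J \<le> j \<Longrightarrow> av (q_fact q j) \<le> \<theta> ^ j"
proof -
  obtain J where J: "\<And>j. J \<le> j \<Longrightarrow> av (q_fact q j) powr (1 / real j) < \<theta>"
    using order_tendstoD(2)[OF omega_q_limit assms] unfolding eventually_sequentially by blast
  have "av (q_fact q j) \<le> \<theta> ^ j" if "max J 1 \<le> j" for j
  proof -
    have "av (q_fact q j) = (av (q_fact q j) powr (1 / real j)) ^ j"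
      using that by (simp add: powr_inverse_power less_imp_le[OF av_q_fact_pos])
    also have "\<dots> \<le> \<theta> ^ j"
      using J[of j] that by (intro power_mono) auto
    finally show ?thesis .
  qed
  then show thesis
    by (rule that)
qed

section \<open>The radius of convergence\<close>

locale q_difference_equation_residue_char =
  q_difference_equation av q g + q_residue_char av q p
  for av :: "'a::field_char_0 \<Rightarrow> real" and q g p
begin

lemma gnorm_gbr_geometric_decay:
  assumes "1 \<le> s" "gnorm (gbr s) < 1"
  obtains \<rho> C where "0 < \<rho>" "\<rho> < 1" "0 < C" "\<And>n. gnorm (gbr n) \<le> C * \<rho> ^ n"
proof -
  define \<theta> where "\<theta> = (omega_q av q + 1) / 2"
  have \<theta>: "omega_q av q < \<theta>" "0 < \<theta>" "\<theta> < 1"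
    unfolding \<theta>_def using omega_q_pos omega_q_lt_1 by auto
  obtain J where J: "\<And>j. J \<le> j \<Longrightarrow> av (q_fact q j) \<le> \<theta> ^ j"
    using av_q_fact_eventually_le_power[OF \<theta>(1)] by blast
  have "0 < s"
    using assms(1) by simp
  show thesis
    by (rule geometric_decay[of s "\<lambda>n. gnorm (gbr n)" \<theta> "\<lambda>j. av (q_fact q j)" J,
          OF \<open>0 < s\<close> assms(2) \<theta>(2,3) gnorm_nonneg[OF EK_gbr] gnorm_gbr_le_1 av_q_fact_le_1 J
          gnorm_gbr_add_le]) (assumption, rule that)
qed

definition radius_term :: "nat \<Rightarrow> ereal" where
  "radius_term s = (if gnorm (gbr s) = 0 then \<infinity>
     else ereal ((gnorm (gbr s) / av (q_fact q s)) powr (- 1 / real s)))"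

lemma Ray_eq: "Ray av q g = min 1 (liminf radius_term)"
  unfolding Ray_def radius_term_def ..

lemma radius_term_eq:
  assumes "gnorm (gbr s) \<noteq> 0"
  shows "radius_term s = ereal (av (q_fact q s) powr (1 / real s) / gnorm (gbr s) powr (1 / real s))"
proof -
  have "0 \<le> gnorm (gbr s)" "0 \<le> av (q_fact q s)"
    using gnorm_nonneg[OF EK_gbr] av_q_fact_pos[of s] by auto
  have "- 1 / real s = - (1 / real s)"
    by simp
  then have "(gnorm (gbr s) / av (q_fact q s)) powr (- 1 / real s)
      = inverse ((gnorm (gbr s) / av (q_fact q s)) powr (1 / real s))"
    by (simp only: powr_minus)
  also have "\<dots> = av (q_fact q s) powr (1 / real s) / gnorm (gbr s) powr (1 / real s)"
    using \<open>0 \<le> gnorm (gbr s)\<close> \<open>0 \<le> av (q_fact q s)\<close> by (simp add: powr_divide)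
  finally show ?thesis
    unfolding radius_term_def using assms by simp
qed

lemma liminf_radius_term_ge:
  assumes \<rho>: "0 < \<rho>" and C: "0 < C" and decay: "\<And>n. gnorm (gbr n) \<le> C * \<rho> ^ n"
  shows "ereal (omega_q av q / \<rho>) \<le> liminf radius_term"
proof -
  define b where "b s = av (q_fact q s) powr (1 / real s) / (C powr (1 / real s) * \<rho>)" for s
  have "(\<lambda>s. C powr (1 / real s)) \<longlonglongrightarrow> C powr 0"
    using C by (intro tendsto_powr tendsto_const lim_const_over_n) auto
  then have "b \<longlonglongrightarrow> omega_q av q / (1 * \<rho>)"
    unfolding b_def using C \<rho> by (intro tendsto_divide omega_q_limit tendsto_mult tendsto_const) auto
  then have "liminf (\<lambda>s. ereal (b s)) = ereal (omega_q av q / \<rho>)"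
    using lim_imp_Liminf[OF trivial_limit_sequentially tendsto_ereal] by simp
  moreover have "ereal (b s) \<le> radius_term s" if "1 \<le> s" for s
  proof (cases "gnorm (gbr s) = 0")
    case False
    then have pos: "0 < gnorm (gbr s)"
      using gnorm_nonneg[OF EK_gbr, of s] by simp
    have "gnorm (gbr s) powr (1 / real s) \<le> (C * \<rho> ^ s) powr (1 / real s)"
      using decay[of s] pos by (intro powr_mono2) auto
    also have "\<dots> = C powr (1 / real s) * \<rho>"
      using C \<rho> that by (simp add: powr_mult powr_realpow[symmetric] powr_powr)
    finally show ?thesis
      unfolding radius_term_eq[OF False] b_def using pos C \<rho> av_q_fact_pos[of s]
      by (auto intro!: divide_left_mono mult_pos_pos)
  qed (simp add: radius_term_def)
  then have "liminf (\<lambda>s. ereal (b s)) \<le> liminf radius_term"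
    by (intro Liminf_mono) (auto simp: eventually_sequentially)
  ultimately show ?thesis
    by simp
qed

lemma omega_q_lt_Ray:
  assumes "1 \<le> s" "gnorm (gbr s) < 1"
  shows "ereal (omega_q av q) < Ray av q g"
proof -
  obtain \<rho> C where \<rho>: "0 < \<rho>" "\<rho> < 1" and "0 < C" "\<And>n. gnorm (gbr n) \<le> C * \<rho> ^ n"
    using gnorm_gbr_geometric_decay[OF assms] by blast
  then have "ereal (omega_q av q / \<rho>) \<le> liminf radius_term"
    by (intro liminf_radius_term_ge)
  moreover have "ereal (omega_q av q) < ereal (omega_q av q / \<rho>)"
    using omega_q_pos \<rho> by (simp add: field_simps)
  ultimately have "ereal (omega_q av q) < liminf radius_term"
    by (metis less_le_trans)
  then show ?thesis
    using omega_q_lt_1 unfolding Ray_eq by simp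
qed

text \<open>If all \<open>|g[s]|\<^sub>1 = 1\<close>, the radius terms are exactly \<open>|[s]\<^sub>q!|^(1/s) \<longlonglongrightarrow> \<omega>\<^sub>q\<close>.\<close>
lemma Ray_le_omega_q:
  assumes "\<And>s. 1 \<le> s \<Longrightarrow> gnorm (gbr s) = 1"
  shows "Ray av q g \<le> ereal (omega_q av q)"
proof -
  have "\<forall>\<^sub>F s in sequentially. radius_term s = ereal (av (q_fact q s) powr (1 / real s))"
    using assms by (auto simp: eventually_sequentially radius_term_eq intro!: exI[of _ 1])
  then have "liminf radius_term = liminf (\<lambda>s. ereal (av (q_fact q s) powr (1 / real s)))"
    by (rule Liminf_eq)
  also have "\<dots> = ereal (omega_q av q)"
    by (rule lim_imp_Liminf[OF trivial_limit_sequentially tendsto_ereal[OF omega_q_limit]])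
  finally show ?thesis
    unfolding Ray_eq by simp
qed

end

theorem lemma5p3p5:
  fixes av :: "'a::field_char_0 \<Rightarrow> real" and p :: nat and q :: 'a and g :: "int \<Rightarrow> 'a"
  assumes K: "cdvf av p"
    and q1: "av (q - 1) < 1"
    and qnroot: "\<forall>n>0. q ^ n \<noteq> 1"
    and gE: "in_EK av g"
    and gnorm: "gauss_norm av g \<le> 1"
  shows "ereal (omega_q av q) < Ray av q g \<longleftrightarrow> (\<exists>s\<ge>1. gauss_norm av (g_br av q g s) < 1)"
proof -
  interpret q_difference_equation_residue_char av q g p
    using K q1 qnroot gE gnorm by unfold_locales (auto simp: cdvf_def)
  show ?thesis
  proof
    assume "ereal (omega_q av q) < Ray av q g"
    then show "\<exists>s\<ge>1. gnorm (gbr s) < 1"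
      using Ray_le_omega_q gnorm_gbr_le_1 by (metis leD less_eq_real_def)
  next
    assume "\<exists>s\<ge>1. gnorm (gbr s) < 1"
    then show "ereal (omega_q av q) < Ray av q g"
      using omega_q_lt_Ray by blast
  qed
qed

end
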